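(* In the twisted Heisenberg category $\mathcal{H}^t$ (defined in the context), for $n\ge 2$ the following relations hold in the algebra $\mathrm{End}(P^n)$, for all admissible $i,j$: $T_iX_i = X_{i+1}T_i + 1 + C_iC_{i+1}$, $\;X_iT_i = T_iX_{i+1} + 1 - C_iC_{i+1}$, $\;C_iX_j = (-1)^{\delta_{i,j}}X_jC_i$, $\;X_iX_j = X_jX_i$.
   Context: $\Bbbk$ is a field of characteristic $0$. $\mathcal{H}^t$ is the $\Bbbk$-linear $\mathbb{Z}/2\mathbb{Z}$-graded (super) monoidal category obtained as the idempotent completion (with finite direct sums and parity shifts) of the monoidal category generated by objects $P, Q$ (unit object $\mathbf 1$) and morphisms: an even upward crossing $s: PP\to PP$; even cups/caps $\eta:\mathbf 1\to QP$, $\varepsilon: QP\to\mathbf 1$, $\eta':\mathbf 1\to PQ$, $\varepsilon':PQ\to\mathbf 1$; and odd "hollow dots" $c_P:P\to P\{1\}$, $c_Q:Q\to Q\{1\}$. Morphisms are planar string diagrams ($P$ upward strand, $Q$ downward strand, composition read bottom to top); diagrams differing by planar isotopy are equal, and odd dots on different strands supercommute (interchanging heights of two dots on different strands gives a sign $-1$). Let $\sigma=(\varepsilon\otimes 1_{PQ})(1_Q\otimes s\otimes 1_Q)(1_{QP}\otimes\eta'):QP\to PQ$ and $\sigma'=(1_{QP}\otimes\varepsilon')(1_Q\otimes s\otimes 1_Q)(\eta\otimes 1_{PQ}):PQ\to QP$. Defining relations: $s^2=1$, braid relation for $s$ on $PPP$; $\sigma\sigma'=1_{PQ}$, $\sigma'\sigma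 = 1_{QP}-\eta\varepsilon-(c_Q\otimes 1_P)\eta\varepsilon(1_Q\otimes c_P)$; $\varepsilon\eta=1_{\mathbf 1}$, $(\varepsilon\otimes 1_P)(1_Q\otimes s)(\eta\otimes 1_P)=0$; $s(c_P\otimes 1)=(1\otimes c_P)s$, $(c_P\otimes 1)s=s(1\otimes c_P)$; $\varepsilon(c_Q\otimes 1_P)=-\varepsilon(1_Q\otimes c_P)$, $\varepsilon'(c_P\otimes 1_Q)=\varepsilon'(1_P\otimes c_Q)$, $(c_Q\otimes 1_P)\eta=(1_Q\otimes c_P)\eta$, $(c_P\otimes 1_Q)\eta'=-(1_P\otimes c_Q)\eta'$; $c_P^2=1_P$, $c_Q^2=-1_Q$, $\varepsilon(1_Q\otimes c_P)\eta=0$. In $\mathrm{End}(P^n)$ (product = composition), $T_i$ is the crossing $s$ applied to strands $i,i+1$ ($1\le i\le n-1$), $C_i$ is $c_P$ on strand $i$, and $X_i$ is the "right curl" $X=(1_P\otimes\varepsilon')(s\otimes 1_Q)(1_P\otimes\eta'):P\to P$ applied to strand $i$ ($1\le i\le n$); $1$ is the identity of $P^n$ and $\delta_{i,j}$ is the Kronecker delta. *)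

theory Defs
  imports Main
begin

text \<open>Objects of the (non-completed) monoidal supercategory are words in P, Q,
  encoded as bool lists: True = P (upward strand), False = Q (downward strand).
  A k-linear strict monoidal supercategory is encoded by the following data:
  Hom spaces (as subsets of an ambient type 'm), parity-homogeneous subspaces,
  composition (sc_comp g f = g after f), tensor product, identities, linear structure.\<close>

abbreviation Pob :: bool where "Pob \<equiv> True"
abbreviation Qob :: bool where "Qob \<equiv> False"

record ('k, 'm) scat =
  sc_hom   :: "bool list \<Rightarrow> bool list \<Rightarrow> 'm set"
  sc_par   :: "bool \<Rightarrow> bool list \<Rightarrow> bool list \<Rightarrow> 'm set"
  sc_comp  :: "'m \<Rightarrow> 'm \<Rightarrow> 'm"
  sc_tens  :: "'m \<Rightarrow> 'm \<Rightarrow> 'm"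
  sc_id    :: "bool list \<Rightarrow> 'm"
  sc_add   :: "'m \<Rightarrow> 'm \<Rightarrow> 'm"
  sc_smult :: "'k \<Rightarrow> 'm \<Rightarrow> 'm"
  sc_zero  :: "bool list \<Rightarrow> bool list \<Rightarrow> 'm"

text \<open>Axioms of a strict monoidal k-linear supercategory (sc_par False = even,
  sc_par True = odd), including the super interchange law.\<close>

definition smcat :: "('k::field, 'm) scat \<Rightarrow> bool" where
"smcat C \<longleftrightarrow>
  (let H = sc_hom C; Pr = sc_par C; cmp = sc_comp C; tns = sc_tens C; idm = sc_id C;
       add = sc_add C; scl = sc_smult C; zer = sc_zero C in
   (\<forall>a b.
      zer a b \<in> H a b \<and>
      (\<forall>f\<in>H a b. \<forall>g\<in>H a b. add f g \<in> H a b) \<and>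
      (\<forall>c. \<forall>f\<in>H a b. scl c f \<in> H a b) \<and>
      (\<forall>f\<in>H a b. \<forall>g\<in>H a b. \<forall>h\<in>H a b. add (add f g) h = add f (add g h)) \<and>
      (\<forall>f\<in>H a b. \<forall>g\<in>H a b. add f g = add g f) \<and>
      (\<forall>f\<in>H a b. add (zer a b) f = f) \<and>
      (\<forall>f\<in>H a b. add f (scl (-1) f) = zer a b) \<and>
      (\<forall>f\<in>H a b. scl 1 f = f) \<and>
      (\<forall>c d. \<forall>f\<in>H a b. scl c (scl d f) = scl (c * d) f) \<and>
      (\<forall>c d. \<forall>f\<in>H a b. scl (c + d) f = add (scl c f) (scl d f)) \<and>
      (\<forall>c. \<forall>f\<in>H a b. \<forall>g\<in>H a b. scl c (add f g) = add (scl c f) (scl c g)) \<and>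
      (\<forall>p. Pr p a b \<subseteq> H a b \<and> zer a b \<in> Pr p a b \<and>
           (\<forall>f\<in>Pr p a b. \<forall>g\<in>Pr p a b. add f g \<in> Pr p a b) \<and>
           (\<forall>c. \<forall>f\<in>Pr p a b. scl c f \<in> Pr p a b)) \<and>
      (\<forall>f\<in>H a b. \<exists>g\<in>Pr False a b. \<exists>h\<in>Pr True a b. f = add g h)) \<and>
   (\<forall>a. idm a \<in> Pr False a a) \<and>
   (\<forall>a b c. \<forall>f\<in>H a b. \<forall>g\<in>H b c. cmp g f \<in> H a c) \<and>
   (\<forall>a b c p q. \<forall>f\<in>Pr p a b. \<forall>g\<in>Pr q b c. cmp g f \<in> Pr (p \<noteq> q) a c) \<and>
   (\<forall>a b c d. \<forall>f\<in>H a b. \<forall>g\<in>H b c. \<forall>h\<in>H c d. cmp h (cmp g f) = cmp (cmp h g) f) \<and>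
   (\<forall>a b. \<forall>f\<in>H a b. cmp (idm b) f = f \<and> cmp f (idm a) = f) \<and>
   (\<forall>a b c. \<forall>f\<in>H a b. \<forall>f'\<in>H a b. \<forall>g\<in>H b c. cmp g (add f f') = add (cmp g f) (cmp g f')) \<and>
   (\<forall>a b c. \<forall>f\<in>H a b. \<forall>g\<in>H b c. \<forall>g'\<in>H b c. cmp (add g g') f = add (cmp g f) (cmp g' f)) \<and>
   (\<forall>a b c k. \<forall>f\<in>H a b. \<forall>g\<in>H b c.
       cmp g (scl k f) = scl k (cmp g f) \<and> cmp (scl k g) f = scl k (cmp g f)) \<and>
   (\<forall>a b c d. \<forall>f\<in>H a b. \<forall>g\<in>H c d. tns f g \<in> H (a @ c) (b @ d)) \<and>
   (\<forall>a b c d p q. \<forall>f\<in>Pr p a b. \<forall>g\<in>Pr q c d. tns f g \<in> Pr (p \<noteq> q) (a @ c) (b @ d)) \<and>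
   (\<forall>a b c d e h. \<forall>f\<in>H a b. \<forall>g\<in>H c d. \<forall>k\<in>H e h. tns (tns f g) k = tns f (tns g k)) \<and>
   (\<forall>a b. \<forall>f\<in>H a b. tns (idm []) f = f \<and> tns f (idm []) = f) \<and>
   (\<forall>a b. tns (idm a) (idm b) = idm (a @ b)) \<and>
   (\<forall>a b c d. \<forall>f\<in>H a b. \<forall>f'\<in>H a b. \<forall>g\<in>H c d. tns (add f f') g = add (tns f g) (tns f' g)) \<and>
   (\<forall>a b c d. \<forall>f\<in>H a b. \<forall>g\<in>H c d. \<forall>g'\<in>H c d. tns f (add g g') = add (tns f g) (tns f g')) \<and>
   (\<forall>a b c d k. \<forall>f\<in>H a b. \<forall>g\<in>H c d.
       tns (scl k f) g = scl k (tns f g) \<and> tns f (scl k g) = scl k (tns f g)) \<and>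
   (\<forall>a b a' c d d' p q p' q'. \<forall>f\<in>Pr p a b. \<forall>g\<in>Pr q c d. \<forall>f'\<in>Pr p' b a'. \<forall>g'\<in>Pr q' d d'.
       cmp (tns f' g') (tns f g) = scl (if q' \<and> p then -1 else 1) (tns (cmp f' f) (cmp g' g))))"

record 'm thgen =
  g_s    :: 'm   \<comment> \<open>upward crossing PP -> PP\<close>
  g_eta  :: 'm
  g_eps  :: 'm
  g_eta2 :: 'm
  g_eps2 :: 'm
  g_cP   :: 'm
  g_cQ   :: 'm

definition th_sigma :: "('k::field, 'm) scat \<Rightarrow> 'm thgen \<Rightarrow> 'm" where
"th_sigma C G = sc_comp C (sc_tens C (g_eps G) (sc_id C [Pob, Qob]))
   (sc_comp C (sc_tens C (sc_tens C (sc_id C [Qob]) (g_s G)) (sc_id C [Qob]))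
      (sc_tens C (sc_id C [Qob, Pob]) (g_eta2 G)))"

definition th_sigma' :: "('k::field, 'm) scat \<Rightarrow> 'm thgen \<Rightarrow> 'm" where
"th_sigma' C G = sc_comp C (sc_tens C (sc_id C [Qob, Pob]) (g_eps2 G))
   (sc_comp C (sc_tens C (sc_tens C (sc_id C [Qob]) (g_s G)) (sc_id C [Qob]))
      (sc_tens C (g_eta G) (sc_id C [Pob, Qob])))"

definition th_X :: "('k::field, 'm) scat \<Rightarrow> 'm thgen \<Rightarrow> 'm" where
"th_X C G = sc_comp C (sc_tens C (sc_id C [Pob]) (g_eps2 G))
   (sc_comp C (sc_tens C (g_s G) (sc_id C [Qob]))
      (sc_tens C (sc_id C [Pob]) (g_eta2 G)))"

definition th_rel :: "('k::field, 'm) scat \<Rightarrow> 'm thgen \<Rightarrow> bool" where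
"th_rel C G \<longleftrightarrow>
  (let Pr = sc_par C; cmp = sc_comp C; tns = sc_tens C; idm = sc_id C;
       add = sc_add C; scl = sc_smult C; zer = sc_zero C;
       s = g_s G; eta = g_eta G; eps = g_eps G; eta2 = g_eta2 G; eps2 = g_eps2 G;
       cP = g_cP G; cQ = g_cQ G;
       P = Pob; Q = Qob;
       neg = scl (-1);
       sig = th_sigma C G; sig' = th_sigma' C G in
   \<comment> \<open>types and parities of generators\<close>
   s \<in> Pr False [P,P] [P,P] \<and>
   eta \<in> Pr False [] [Q,P] \<and> eps \<in> Pr False [Q,P] [] \<and>
   eta2 \<in> Pr False [] [P,Q] \<and> eps2 \<in> Pr False [P,Q] [] \<and>
   cP \<in> Pr True [P] [P] \<and> cQ \<in> Pr True [Q] [Q] \<and>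
   \<comment> \<open>planar isotopy: zigzag identities\<close>
   cmp (tns (idm [Q]) eps2) (tns eta (idm [Q])) = idm [Q] \<and>
   cmp (tns eps2 (idm [P])) (tns (idm [P]) eta) = idm [P] \<and>
   cmp (tns (idm [P]) eps) (tns eta2 (idm [P])) = idm [P] \<and>
   cmp (tns eps (idm [Q])) (tns (idm [Q]) eta2) = idm [Q] \<and>
   \<comment> \<open>planar isotopy: the two 180-degree rotations of the crossing agree\<close>
   cmp (tns (cmp eps (tns (tns (idm [Q]) eps) (idm [P]))) (idm [Q,Q]))
       (cmp (tns (tns (idm [Q,Q]) s) (idm [Q,Q]))
            (tns (idm [Q,Q]) (cmp (tns (tns (idm [P]) eta2) (idm [Q])) eta2)))
   = cmp (tns (idm [Q,Q]) (cmp eps2 (tns (tns (idm [P]) eps2) (idm [Q]))))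
       (cmp (tns (tns (idm [Q,Q]) s) (idm [Q,Q]))
            (tns (cmp (tns (tns (idm [Q]) eta) (idm [P])) eta) (idm [Q,Q]))) \<and>
   \<comment> \<open>defining relations\<close>
   cmp s s = idm [P,P] \<and>
   cmp (tns s (idm [P])) (cmp (tns (idm [P]) s) (tns s (idm [P])))
     = cmp (tns (idm [P]) s) (cmp (tns s (idm [P])) (tns (idm [P]) s)) \<and>
   cmp sig sig' = idm [P,Q] \<and>
   cmp sig' sig = add (add (idm [Q,P]) (neg (cmp eta eps)))
                      (neg (cmp (tns cQ (idm [P])) (cmp eta (cmp eps (tns (idm [Q]) cP))))) \<and>
   cmp eps eta = idm [] \<and>
   cmp (tns eps (idm [P])) (cmp (tns (idm [Q]) s) (tns eta (idm [P]))) = zer [P] [P] \<and>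
   cmp s (tns cP (idm [P])) = cmp (tns (idm [P]) cP) s \<and>
   cmp (tns cP (idm [P])) s = cmp s (tns (idm [P]) cP) \<and>
   cmp eps (tns cQ (idm [P])) = neg (cmp eps (tns (idm [Q]) cP)) \<and>
   cmp eps2 (tns cP (idm [Q])) = cmp eps2 (tns (idm [P]) cQ) \<and>
   cmp (tns cQ (idm [P])) eta = cmp (tns (idm [Q]) cP) eta \<and>
   cmp (tns cP (idm [Q])) eta2 = neg (cmp (tns (idm [P]) cQ) eta2) \<and>
   cmp cP cP = idm [P] \<and>
   cmp cQ cQ = neg (idm [Q]) \<and>
   cmp eps (cmp (tns (idm [Q]) cP) eta) = zer [] [])"

text \<open>Elements of End(P^n), strands numbered 1..n from the left.\<close>

definition th_T :: "('k::field, 'm) scat \<Rightarrow> 'm thgen \<Rightarrow> nat \<Rightarrow> nat \<Rightarrow> 'm" where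
"th_T C G n i = sc_tens C (sc_tens C (sc_id C (replicate (i - 1) Pob)) (g_s G))
                          (sc_id C (replicate (n - i - 1) Pob))"

definition th_C :: "('k::field, 'm) scat \<Rightarrow> 'm thgen \<Rightarrow> nat \<Rightarrow> nat \<Rightarrow> 'm" where
"th_C C G n i = sc_tens C (sc_tens C (sc_id C (replicate (i - 1) Pob)) (g_cP G))
                          (sc_id C (replicate (n - i) Pob))"

definition th_Xi :: "('k::field, 'm) scat \<Rightarrow> 'm thgen \<Rightarrow> nat \<Rightarrow> nat \<Rightarrow> 'm" where
"th_Xi C G n i = sc_tens C (sc_tens C (sc_id C (replicate (i - 1) Pob)) (th_X C G))
                          (sc_id C (replicate (n - i) Pob))"

end

theory Submission
  imports Defs
begin

text \<open>Write X \<otimes> 1 as the lower half of the curl (a cup followed by the crossing) composed with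
  its upper half (a cap). Inserting 1 = \<sigma>'\<sigma> + \<eta>\<epsilon> + (cQ \<otimes> 1)\<eta>\<epsilon>(1 \<otimes> cP) on QP into the downward
  segment splits s(X \<otimes> 1) into three diagrams: through \<sigma>'\<sigma> the curl is pulled across the crossing,
  giving (1 \<otimes> X)s by the braid relation; the cup-cap term straightens by the zigzag relations
  and s s = 1 to the identity; the dotted term leaves (cP \<otimes> 1)(1 \<otimes> cP). Conjugating by s gives the
  second relation. An odd dot slid once around the curl changes sign exactly once, at the cup,
  so cP X = -X cP. The relations in End(P^n) follow by whiskering with identity strands;
  morphisms on different strands supercommute by the super interchange law.\<close>

locale supermonoidal =
  fixes C :: "('k::field, 'm) scat"
  assumes smcat: "smcat C"
begin

abbreviation hom where "hom \<equiv> sc_hom C"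
abbreviation par where "par \<equiv> sc_par C"
abbreviation mcomp (infixr "\<odot>" 70) where "g \<odot> f \<equiv> sc_comp C g f"
abbreviation mtensor (infixl "\<otimes>" 75) where "f \<otimes> g \<equiv> sc_tens C f g"
abbreviation idm where "idm \<equiv> sc_id C"
abbreviation madd (infixl "\<oplus>" 65) where "f \<oplus> g \<equiv> sc_add C f g"
abbreviation sm where "sm \<equiv> sc_smult C"
abbreviation zer where "zer \<equiv> sc_zero C"

lemmas axioms = smcat[unfolded smcat_def Let_def]

lemma zero_hom: "zer a b \<in> hom a b" using axioms by simp
lemma add_hom: "f \<in> hom a b \<Longrightarrow> g \<in> hom a b \<Longrightarrow> f \<oplus> g \<in> hom a b"
  using axioms by simp
lemma smult_hom: "f \<in> hom a b \<Longrightarrow> sm c f \<in> hom a b" using axioms by simp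
lemma hom_add_assoc: "f \<in> hom a b \<Longrightarrow> g \<in> hom a b \<Longrightarrow> h \<in> hom a b \<Longrightarrow> (f \<oplus> g) \<oplus> h = f \<oplus> (g \<oplus> h)"
  using axioms by simp
lemma hom_add_comm: "f \<in> hom a b \<Longrightarrow> g \<in> hom a b \<Longrightarrow> f \<oplus> g = g \<oplus> f"
  using axioms by simp
lemma hom_zero_add: "f \<in> hom a b \<Longrightarrow> zer a b \<oplus> f = f" using axioms by simp
lemma hom_add_neg: "f \<in> hom a b \<Longrightarrow> f \<oplus> sm (-1) f = zer a b"
  using axioms by simp
lemma smult_one: "f \<in> hom a b \<Longrightarrow> sm 1 f = f" using axioms by simp
lemma smult_smult: "f \<in> hom a b \<Longrightarrow> sm c (sm d f) = sm (c * d) f"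
  using axioms by simp
lemma par_subset_hom: "par p a b \<subseteq> hom a b" using axioms by simp
lemma par_hom: "f \<in> par p a b \<Longrightarrow> f \<in> hom a b" using par_subset_hom by blast

lemma comp_assoc: "f \<in> hom a b \<Longrightarrow> g \<in> hom b c \<Longrightarrow> h \<in> hom c d \<Longrightarrow> h \<odot> (g \<odot> f) = (h \<odot> g) \<odot> f"
  using axioms by simp
lemma id_comp: "f \<in> hom a b \<Longrightarrow> idm b \<odot> f = f" using axioms by simp
lemma comp_id: "f \<in> hom a b \<Longrightarrow> f \<odot> idm a = f" using axioms by simp
lemma comp_add_right: "f \<in> hom a b \<Longrightarrow> f' \<in> hom a b \<Longrightarrow> g \<in> hom b c \<Longrightarrow> g \<odot> (f \<oplus> f') = (g \<odot> f) \<oplus> (g \<odot> f')"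
  using axioms by simp
lemma comp_add_left: "f \<in> hom a b \<Longrightarrow> g \<in> hom b c \<Longrightarrow> g' \<in> hom b c \<Longrightarrow> (g \<oplus> g') \<odot> f = (g \<odot> f) \<oplus> (g' \<odot> f)"
  using axioms by simp
lemma comp_smult_right: "f \<in> hom a b \<Longrightarrow> g \<in> hom b c \<Longrightarrow> g \<odot> sm k f = sm k (g \<odot> f)"
  using axioms by simp
lemma tensor_assoc: "f \<in> hom a b \<Longrightarrow> g \<in> hom c d \<Longrightarrow> k \<in> hom e h \<Longrightarrow> (f \<otimes> g) \<otimes> k = f \<otimes> (g \<otimes> k)"
  using axioms by simp
lemma unit_tensor: "f \<in> hom a b \<Longrightarrow> idm [] \<otimes> f = f" using axioms by simp
lemma tensor_unit: "f \<in> hom a b \<Longrightarrow> f \<otimes> idm [] = f" using axioms by simp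
lemma tensor_id_id: "idm a \<otimes> idm b = idm (a @ b)" using axioms by simp
lemma tensor_add_left:
  "f \<in> hom a b \<Longrightarrow> f' \<in> hom a b \<Longrightarrow> g \<in> hom c d \<Longrightarrow> (f \<oplus> f') \<otimes> g = (f \<otimes> g) \<oplus> (f' \<otimes> g)"
  using axioms by simp
lemma tensor_add_right:
  "f \<in> hom a b \<Longrightarrow> g \<in> hom c d \<Longrightarrow> g' \<in> hom c d \<Longrightarrow> f \<otimes> (g \<oplus> g') = (f \<otimes> g) \<oplus> (f \<otimes> g')"
  using axioms by simp
lemma tensor_smult_left: "f \<in> hom a b \<Longrightarrow> g \<in> hom c d \<Longrightarrow> sm k f \<otimes> g = sm k (f \<otimes> g)"
  using axioms by simp
lemma tensor_smult_right: "f \<in> hom a b \<Longrightarrow> g \<in> hom c d \<Longrightarrow> f \<otimes> sm k g = sm k (f \<otimes> g)"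
  using axioms by simp
lemma super_interchange:
  "f \<in> par p a b \<Longrightarrow> g \<in> par q c d \<Longrightarrow> f' \<in> par p' b a' \<Longrightarrow> g' \<in> par q' d d' \<Longrightarrow>
   (f' \<otimes> g') \<odot> (f \<otimes> g) = sm (if q' \<and> p then -1 else 1) ((f' \<odot> f) \<otimes> (g' \<odot> g))"
  using axioms by simp

lemma par_id: "idm a \<in> par False a a"
  using axioms by simp

text \<open>Parity judgements with the indices given by equations: a goal f \<in> par ?p ?a ?b is
  discharged by repeated rule application, simp normalising the list indices.\<close>

lemma par_idI: "r = False \<Longrightarrow> x = a \<Longrightarrow> y = a \<Longrightarrow> idm a \<in> par r x y"
  using axioms by simp
lemma par_compI: "f \<in> par p a b \<Longrightarrow> g \<in> par q b' c \<Longrightarrow> b' = b \<Longrightarrow> r = (p \<noteq> q) \<Longrightarrow> x = a \<Longrightarrow> y = c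
    \<Longrightarrow> g \<odot> f \<in> par r x y"
  using axioms by simp
lemma par_tensorI: "f \<in> par p a b \<Longrightarrow> g \<in> par q c d \<Longrightarrow> r = (p \<noteq> q) \<Longrightarrow> x = a @ c \<Longrightarrow> y = b @ d
    \<Longrightarrow> f \<otimes> g \<in> par r x y"
  using axioms by simp
lemma par_addI: "f \<in> par p a b \<Longrightarrow> g \<in> par p' a' b' \<Longrightarrow> p' = p \<Longrightarrow> a' = a \<Longrightarrow> b' = b \<Longrightarrow> r = p \<Longrightarrow> x = a
    \<Longrightarrow> y = b \<Longrightarrow> f \<oplus> g \<in> par r x y"
  using axioms by simp
lemma par_smultI: "f \<in> par p a b \<Longrightarrow> r = p \<Longrightarrow> x = a \<Longrightarrow> y = b \<Longrightarrow> sm c f \<in> par r x y"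
  using axioms by simp

lemmas par_intros = par_hom par_idI par_compI par_tensorI par_addI par_smultI refl

lemma id_comp_id: "idm a \<odot> idm a = idm a"
  by (rule id_comp, rule par_hom, rule par_id)

lemma interchange_even:
  assumes "f \<in> par p a b" "g \<in> par q c d" "f' \<in> par p' b a'" "g' \<in> par q' d d'" "\<not> (q' \<and> p)"
  shows "(f' \<otimes> g') \<odot> (f \<otimes> g) = (f' \<odot> f) \<otimes> (g' \<odot> g)"
proof -
  have "(f' \<odot> f) \<otimes> (g' \<odot> g) \<in> hom (a @ c) (a' @ d')"
    by (rule par_intros assms | simp)+
  then show ?thesis using super_interchange[OF assms(1-4)] smult_one assms(5) by simp
qed

lemma interchange_odd:
  assumes "f \<in> par True a b" "g \<in> par q c d" "f' \<in> par p' b a'" "g' \<in> par True d d'"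
  shows "(f' \<otimes> g') \<odot> (f \<otimes> g) = sm (-1) ((f' \<odot> f) \<otimes> (g' \<odot> g))"
  using super_interchange[OF assms] by simp

lemma comp_tensor_id:
  assumes "f \<in> par p a b" "g \<in> par q b c"
  shows "(g \<odot> f) \<otimes> idm d = (g \<otimes> idm d) \<odot> (f \<otimes> idm d)"
proof -
  have "(g \<otimes> idm d) \<odot> (f \<otimes> idm d) = (g \<odot> f) \<otimes> (idm d \<odot> idm d)"
    by (rule interchange_even, (rule par_intros assms | simp)+)
  then show ?thesis by (simp add: id_comp_id)
qed

lemma id_tensor_comp:
  assumes "f \<in> par p a b" "g \<in> par q b c"
  shows "idm d \<otimes> (g \<odot> f) = (idm d \<otimes> g) \<odot> (idm d \<otimes> f)"
proof -
  have "(idm d \<otimes> g) \<odot> (idm d \<otimes> f) = (idm d \<odot> idm d) \<otimes> (g \<odot> f)"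
    by (rule interchange_even, (rule par_intros assms | simp)+)
  then show ?thesis by (simp add: id_comp_id)
qed

lemma tensor_as_comp_left_above:
  assumes "f \<in> par p a b" "g \<in> par q c d"
  shows "f \<otimes> g = (f \<otimes> idm d) \<odot> (idm a \<otimes> g)"
proof -
  have "(f \<otimes> idm d) \<odot> (idm a \<otimes> g) = (f \<odot> idm a) \<otimes> (idm d \<odot> g)"
    by (rule interchange_even, (rule par_intros assms | simp)+)
  then show ?thesis using assms by (simp add: comp_id[OF par_hom] id_comp[OF par_hom])
qed

lemma tensor_as_comp_right_above:
  assumes "f \<in> par p a b" "g \<in> par q c d" "\<not> (p \<and> q)"
  shows "f \<otimes> g = (idm b \<otimes> g) \<odot> (f \<otimes> idm c)"
proof -
  have "(idm b \<otimes> g) \<odot> (f \<otimes> idm c) = (idm b \<odot> f) \<otimes> (g \<odot> idm c)"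
    using interchange_even[OF assms(1) par_id par_id assms(2)] assms(3) by auto
  then show ?thesis using assms(1,2) by (simp add: comp_id[OF par_hom] id_comp[OF par_hom])
qed

lemma odd_tensor_as_comp_right_above:
  assumes "f \<in> par True a b" "g \<in> par True c d"
  shows "(idm b \<otimes> g) \<odot> (f \<otimes> idm c) = sm (-1) (f \<otimes> g)"
proof -
  have "(idm b \<otimes> g) \<odot> (f \<otimes> idm c) = sm (-1) ((idm b \<odot> f) \<otimes> (g \<odot> idm c))"
    by (rule interchange_odd[OF assms(1) _ _ assms(2)], (rule par_intros | simp)+)
  then show ?thesis using assms by (simp add: comp_id[OF par_hom] id_comp[OF par_hom])
qed

lemma disjoint_slide:
  assumes "f \<in> par p a b" "g \<in> par q c d" "\<not> (p \<and> q)"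
  shows "(idm b \<otimes> g) \<odot> (f \<otimes> idm c) = (f \<otimes> idm d) \<odot> (idm a \<otimes> g)"
  using tensor_as_comp_left_above[OF assms(1,2)] tensor_as_comp_right_above[OF assms] by simp

lemma cup_slide:
  assumes "f \<in> par False [] b" "g \<in> par q c d"
  shows "(idm b \<otimes> g) \<odot> (f \<otimes> idm c) = (f \<otimes> idm d) \<odot> g"
  using disjoint_slide[OF assms] unit_tensor[OF par_hom[OF assms(2)]] by simp

lemma cap_slide:
  assumes "f \<in> par False b []" "g \<in> par q c d"
  shows "(f \<otimes> idm d) \<odot> (idm b \<otimes> g) = g \<odot> (f \<otimes> idm c)"
  using disjoint_slide[OF assms] unit_tensor[OF par_hom[OF assms(2)]] by simp

lemma id_tensor_assoc:
  assumes "g \<in> par p a b"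
  shows "idm u \<otimes> (idm v \<otimes> g) = idm (u @ v) \<otimes> g"
  by (subst tensor_assoc[symmetric], (rule par_intros assms | simp)+, simp add: tensor_id_id)

lemma tensor_id_assoc:
  assumes "g \<in> par p a b"
  shows "(g \<otimes> idm u) \<otimes> idm v = g \<otimes> idm (u @ v)"
  by (subst tensor_assoc, (rule par_intros assms | simp)+, simp add: tensor_id_id)

lemma comp_sum3_sandwich:
  assumes "h \<in> par p c d" "w \<in> par p' b c" "x1 \<in> par q a' b" "x2 \<in> par q a' b" "x3 \<in> par q a' b"
    "k \<in> par r a a'"
  shows "h \<odot> (w \<odot> ((x1 \<oplus> x2 \<oplus> x3) \<odot> k))
    = h \<odot> (w \<odot> (x1 \<odot> k)) \<oplus> h \<odot> (w \<odot> (x2 \<odot> k)) \<oplus> h \<odot> (w \<odot> (x3 \<odot> k))"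
proof -
  have "(x1 \<oplus> x2 \<oplus> x3) \<odot> k = (x1 \<odot> k) \<oplus> (x2 \<odot> k) \<oplus> (x3 \<odot> k)"
    by (subst comp_add_left, (rule par_intros assms | simp)+,
        subst comp_add_left, (rule par_intros assms | simp)+)
  moreover have "w \<odot> ((x1 \<odot> k) \<oplus> (x2 \<odot> k) \<oplus> (x3 \<odot> k)) = w \<odot> (x1 \<odot> k) \<oplus> w \<odot> (x2 \<odot> k) \<oplus> w \<odot> (x3 \<odot> k)"
    by (subst comp_add_right, (rule par_intros assms | simp)+,
        subst comp_add_right, (rule par_intros assms | simp)+)
  moreover have "h \<odot> (w \<odot> (x1 \<odot> k) \<oplus> w \<odot> (x2 \<odot> k) \<oplus> w \<odot> (x3 \<odot> k))
      = h \<odot> (w \<odot> (x1 \<odot> k)) \<oplus> h \<odot> (w \<odot> (x2 \<odot> k)) \<oplus> h \<odot> (w \<odot> (x3 \<odot> k))"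
    by (subst comp_add_right, (rule par_intros assms | simp)+,
        subst comp_add_right, (rule par_intros assms | simp)+)
  ultimately show ?thesis by simp
qed

lemma smult_neg_neg: "f \<in> hom a b \<Longrightarrow> sm (-1) (sm (-1) f) = f"
  by (simp add: smult_smult smult_one)

lemma eq_add_of_eq_diff:
  assumes a: "a \<in> hom u v" and e: "e \<in> hom u v" and d: "d \<in> hom u v"
    and x: "x = a \<oplus> sm (-1) e \<oplus> sm (-1) d"
  shows "a = x \<oplus> e \<oplus> d"
proof -
  have ne: "sm (-1) e \<in> hom u v" and nd: "sm (-1) d \<in> hom u v" using e d smult_hom by auto
  have cancel_d: "sm (-1) d \<oplus> d = zer u v"
    using hom_add_comm[OF nd d] hom_add_neg[OF d] by simp
  have cancel_e: "sm (-1) e \<oplus> e = zer u v"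
    using hom_add_comm[OF ne e] hom_add_neg[OF e] by simp
  have "x \<oplus> e \<oplus> d = x \<oplus> (e \<oplus> d)"
    using x a e d ne nd by (simp add: hom_add_assoc add_hom)
  also have "\<dots> = a \<oplus> ((sm (-1) e \<oplus> sm (-1) d) \<oplus> (e \<oplus> d))"
    using x a e d ne nd by (simp add: hom_add_assoc add_hom)
  also have "(sm (-1) e \<oplus> sm (-1) d) \<oplus> (e \<oplus> d) = sm (-1) e \<oplus> (sm (-1) d \<oplus> (d \<oplus> e))"
    using ne nd e d by (simp add: hom_add_assoc hom_add_comm[of e] add_hom)
  also have "sm (-1) d \<oplus> (d \<oplus> e) = e"
    using hom_add_assoc[OF nd d e, symmetric] cancel_d hom_zero_add[OF e] by simp
  also have "a \<oplus> (sm (-1) e \<oplus> e) = a"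
    using cancel_e hom_add_comm[OF a zero_hom] hom_zero_add[OF a] by simp
  finally show ?thesis by simp
qed

abbreviation whisker where "whisker u f v \<equiv> (idm u \<otimes> f) \<otimes> idm v"

lemma whisker_comp:
  assumes "f \<in> par p x y" "g \<in> par q y z"
  shows "whisker u g v \<odot> whisker u f v = whisker u (g \<odot> f) v"
proof -
  have "whisker u g v \<odot> whisker u f v = ((idm u \<otimes> g) \<odot> (idm u \<otimes> f)) \<otimes> idm v"
    by (rule comp_tensor_id[symmetric], (rule par_intros assms | simp)+)
  also have "(idm u \<otimes> g) \<odot> (idm u \<otimes> f) = idm u \<otimes> (g \<odot> f)"
    by (rule id_tensor_comp[symmetric], (rule par_intros assms | simp)+)
  finally show ?thesis .
qed

lemma whisker_tensor_id:
  assumes "f \<in> par p x y"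
  shows "whisker u (f \<otimes> idm w) v = whisker u f (w @ v)"
proof -
  have "whisker u (f \<otimes> idm w) v = ((idm u \<otimes> f) \<otimes> idm w) \<otimes> idm v"
    by (subst tensor_assoc, (rule par_intros assms | simp)+)
  also have "\<dots> = (idm u \<otimes> f) \<otimes> (idm w \<otimes> idm v)"
    by (rule tensor_assoc, (rule par_intros assms | simp)+)
  finally show ?thesis by (simp add: tensor_id_id)
qed

lemma whisker_id_tensor:
  assumes "f \<in> par p x y"
  shows "whisker u (idm w \<otimes> f) v = whisker (u @ w) f v"
proof -
  have "idm u \<otimes> (idm w \<otimes> f) = (idm u \<otimes> idm w) \<otimes> f"
    by (rule tensor_assoc[symmetric], (rule par_intros assms | simp)+)
  then show ?thesis by (simp add: tensor_id_id)
qed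

lemma whisker_add:
  assumes "f \<in> par p x y" "g \<in> par p x y"
  shows "whisker u (f \<oplus> g) v = whisker u f v \<oplus> whisker u g v"
  by (subst tensor_add_right, (rule par_intros assms | simp)+,
      rule tensor_add_left, (rule par_intros assms | simp)+)

lemma whisker_smult:
  assumes "f \<in> par p x y"
  shows "whisker u (sm c f) v = sm c (whisker u f v)"
  by (subst tensor_smult_right, (rule par_intros assms | simp)+,
      rule tensor_smult_left, (rule par_intros assms | simp)+)

lemma whisker_id: "whisker u (idm w) v = idm (u @ w @ v)"
  by (simp add: tensor_id_id)

lemma whisker_disjoint_comp:
  assumes f: "f \<in> par p x x'" and g: "g \<in> par q y y'"
  shows "whisker u f (w @ y' @ v) \<odot> whisker (u @ x @ w) g v = whisker u (f \<otimes> (idm w \<otimes> g)) v"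
    and "whisker (u @ x' @ w) g v \<odot> whisker u f (w @ y @ v)
           = sm (if p \<and> q then -1 else 1) (whisker u (f \<otimes> (idm w \<otimes> g)) v)"
proof -
  have f_lift: "whisker u f (w @ z @ v) = whisker u (f \<otimes> idm (w @ z)) v" for z
    using whisker_tensor_id[OF f] by simp
  have g_lift: "whisker (u @ z @ w) g v = whisker u (idm z \<otimes> (idm w \<otimes> g)) v" for z
    using whisker_id_tensor[OF g, of u "z @ w" v] id_tensor_assoc[OF g, of z w] by simp
  have below: "(f \<otimes> idm (w @ y')) \<odot> (idm x \<otimes> (idm w \<otimes> g)) = f \<otimes> (idm w \<otimes> g)"
    by (rule tensor_as_comp_left_above[symmetric], (rule par_intros f g | simp)+)
  have above: "(idm x' \<otimes> (idm w \<otimes> g)) \<odot> (f \<otimes> idm (w @ y))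
      = sm (if p \<and> q then -1 else 1) (f \<otimes> (idm w \<otimes> g))"
  proof -
    have "(idm x' \<otimes> (idm w \<otimes> g)) \<odot> (f \<otimes> idm (w @ y))
        = sm (if q \<and> p then -1 else 1) ((idm x' \<odot> f) \<otimes> ((idm w \<otimes> g) \<odot> idm (w @ y)))"
      by (rule super_interchange, (rule par_intros f g | simp)+)
    also have "(idm x' \<odot> f) \<otimes> ((idm w \<otimes> g) \<odot> idm (w @ y)) = f \<otimes> (idm w \<otimes> g)"
      by (subst id_comp, (rule par_intros f | simp)+, subst comp_id, (rule par_intros g | simp)+)
    finally show ?thesis by (simp add: conj_commute)
  qed
  show "whisker u f (w @ y' @ v) \<odot> whisker (u @ x @ w) g v = whisker u (f \<otimes> (idm w \<otimes> g)) v"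
    unfolding f_lift g_lift
    by (subst whisker_comp, (rule par_intros f g | simp)+, simp only: below)
  show "whisker (u @ x' @ w) g v \<odot> whisker u f (w @ y @ v)
      = sm (if p \<and> q then -1 else 1) (whisker u (f \<otimes> (idm w \<otimes> g)) v)"
  proof -
    have "whisker u (idm x' \<otimes> (idm w \<otimes> g)) v \<odot> whisker u (f \<otimes> idm (w @ y)) v
        = whisker u ((idm x' \<otimes> (idm w \<otimes> g)) \<odot> (f \<otimes> idm (w @ y))) v"
      by (rule whisker_comp, (rule par_intros f g | simp)+)
    also have "\<dots> = sm (if p \<and> q then -1 else 1) (whisker u (f \<otimes> (idm w \<otimes> g)) v)"
      unfolding above by (rule whisker_smult, (rule par_intros f g | simp)+)
    finally show ?thesis unfolding f_lift g_lift .
  qed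
qed

abbreviation Ps :: "nat \<Rightarrow> bool list" where "Ps k \<equiv> replicate k Pob"

lemma whisker_P_right:
  assumes "f \<in> par p x y"
  shows "whisker u (f \<otimes> idm [Pob]) (Ps m) = whisker u f (Ps (Suc m))"
  using whisker_tensor_id[OF assms, of u "[Pob]"] by simp

lemma whisker_P_left:
  assumes "f \<in> par p x y"
  shows "whisker (Ps k) (idm [Pob] \<otimes> f) v = whisker (Ps (Suc k)) f v"
  using whisker_id_tensor[OF assms, of "Ps k" "[Pob]"] by (simp add: replicate_append_same)

lemma whisker_P_par:
  assumes "f \<in> par p [Pob] [Pob]" "1 \<le> i" "i \<le> n"
  shows "whisker (Ps (i - 1)) f (Ps (n - i)) \<in> par p (Ps n) (Ps n)"
proof -
  have "Ps (i - 1 + Suc (n - i)) = Ps (i - 1) @ [Pob] @ Ps (n - i)"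
    unfolding replicate_add by simp
  moreover have "i - 1 + Suc (n - i) = n" using assms(2,3) by arith
  ultimately have n: "Ps n = Ps (i - 1) @ [Pob] @ Ps (n - i)" by simp
  have "whisker (Ps (i - 1)) f (Ps (n - i))
      \<in> par p (Ps (i - 1) @ [Pob] @ Ps (n - i)) (Ps (i - 1) @ [Pob] @ Ps (n - i))"
    by (rule par_intros assms | simp)+
  then show ?thesis unfolding n .
qed

lemma P_strands_commute:
  assumes f: "f \<in> par p [Pob] [Pob]" and g: "g \<in> par q [Pob] [Pob]" and "\<not> (p \<and> q)"
    and "1 \<le> i" "i < j" "j \<le> n"
  shows "whisker (Ps (i - 1)) f (Ps (n - i)) \<odot> whisker (Ps (j - 1)) g (Ps (n - j))
       = whisker (Ps (j - 1)) g (Ps (n - j)) \<odot> whisker (Ps (i - 1)) f (Ps (n - i))"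
proof -
  define a b c where "a = i - 1" and "b = j - i - 1" and "c = n - j"
  have "n - i = b + Suc c" "j - 1 = a + Suc b"
    using assms(4-6) unfolding a_def b_def c_def by arith+
  then have i: "Ps (i - 1) = Ps a" and ni: "Ps (n - i) = Ps b @ [Pob] @ Ps c"
    and j: "Ps (j - 1) = Ps a @ [Pob] @ Ps b" and nj: "Ps (n - j) = Ps c"
    by (simp_all add: a_def c_def replicate_add replicate_append_same)
  have "whisker (Ps a) (f \<otimes> (idm (Ps b) \<otimes> g)) (Ps c)
      \<in> hom (Ps a @ ([Pob] @ Ps b @ [Pob]) @ Ps c) (Ps a @ ([Pob] @ Ps b @ [Pob]) @ Ps c)"
    by (rule par_intros f g | simp)+
  then show ?thesis
    unfolding i ni j nj using whisker_disjoint_comp[OF f g, of "Ps a" "Ps b" "Ps c"] assms(3)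
    by (simp add: smult_one)
qed

end

locale twisted_heisenberg = supermonoidal C for C :: "('k::field, 'm) scat" +
  fixes G :: "'m thgen"
  assumes th_rel: "th_rel C G"
begin

abbreviation s where "s \<equiv> g_s G"
abbreviation \<eta> where "\<eta> \<equiv> g_eta G"
abbreviation \<epsilon> where "\<epsilon> \<equiv> g_eps G"
abbreviation \<eta>' where "\<eta>' \<equiv> g_eta2 G"
abbreviation \<epsilon>' where "\<epsilon>' \<equiv> g_eps2 G"
abbreviation cP where "cP \<equiv> g_cP G"
abbreviation cQ where "cQ \<equiv> g_cQ G"
abbreviation X where "X \<equiv> th_X C G"
abbreviation \<sigma> where "\<sigma> \<equiv> th_sigma C G"
abbreviation \<sigma>' where "\<sigma>' \<equiv> th_sigma' C G"

abbreviation iP where "iP \<equiv> idm [Pob]"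
abbreviation iQ where "iQ \<equiv> idm [Qob]"
abbreviation iPP where "iPP \<equiv> idm [Pob, Pob]"
abbreviation iPQ where "iPQ \<equiv> idm [Pob, Qob]"
abbreviation iQP where "iQP \<equiv> idm [Qob, Pob]"

lemmas relations = th_rel[unfolded th_rel_def Let_def]

lemma par_s: "s \<in> par False [Pob, Pob] [Pob, Pob]" using relations by (elim conjE) assumption
lemma par_cP: "cP \<in> par True [Pob] [Pob]" using relations by (elim conjE) assumption
lemma par_cQ: "cQ \<in> par True [Qob] [Qob]" using relations by (elim conjE) assumption

lemma par_sI: "r = False \<Longrightarrow> x = [Pob, Pob] \<Longrightarrow> y = [Pob, Pob] \<Longrightarrow> s \<in> par r x y"
  using par_s by simp
lemma par_\<eta>I: "r = False \<Longrightarrow> x = [] \<Longrightarrow> y = [Qob, Pob] \<Longrightarrow> \<eta> \<in> par r x y"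
  using relations by (elim conjE) simp
lemma par_\<epsilon>I: "r = False \<Longrightarrow> x = [Qob, Pob] \<Longrightarrow> y = [] \<Longrightarrow> \<epsilon> \<in> par r x y"
  using relations by (elim conjE) simp
lemma par_\<eta>'I: "r = False \<Longrightarrow> x = [] \<Longrightarrow> y = [Pob, Qob] \<Longrightarrow> \<eta>' \<in> par r x y"
  using relations by (elim conjE) simp
lemma par_\<epsilon>'I: "r = False \<Longrightarrow> x = [Pob, Qob] \<Longrightarrow> y = [] \<Longrightarrow> \<epsilon>' \<in> par r x y"
  using relations by (elim conjE) simp
lemma par_cPI: "r = True \<Longrightarrow> x = [Pob] \<Longrightarrow> y = [Pob] \<Longrightarrow> cP \<in> par r x y"
  using par_cP by simp
lemma par_cQI: "r = True \<Longrightarrow> x = [Qob] \<Longrightarrow> y = [Qob] \<Longrightarrow> cQ \<in> par r x y"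
  using par_cQ by simp

lemmas generator_typing = par_intros par_sI par_\<eta>I par_\<epsilon>I par_\<eta>'I par_\<epsilon>'I par_cPI par_cQI

lemma par_XI: "r = False \<Longrightarrow> x = [Pob] \<Longrightarrow> y = [Pob] \<Longrightarrow> X \<in> par r x y"
  unfolding th_X_def by (rule generator_typing | simp | assumption)+
lemma par_\<sigma>I: "r = False \<Longrightarrow> x = [Qob, Pob] \<Longrightarrow> y = [Pob, Qob] \<Longrightarrow> \<sigma> \<in> par r x y"
  unfolding th_sigma_def by (rule generator_typing | simp | assumption)+
lemma par_\<sigma>'I: "r = False \<Longrightarrow> x = [Pob, Qob] \<Longrightarrow> y = [Qob, Pob] \<Longrightarrow> \<sigma>' \<in> par r x y"
  unfolding th_sigma'_def by (rule generator_typing | simp | assumption)+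

lemma par_X: "X \<in> par False [Pob] [Pob]"
  by (rule par_XI) simp_all

lemmas typing = generator_typing par_XI par_\<sigma>I par_\<sigma>'I

lemma zigzag_P_cap: "(iP \<otimes> \<epsilon>) \<odot> (\<eta>' \<otimes> iP) = iP"
  using relations by (elim conjE) assumption
lemma zigzag_P_cap': "(\<epsilon>' \<otimes> iP) \<odot> (iP \<otimes> \<eta>) = iP"
  using relations by (elim conjE) assumption
lemma s_s: "s \<odot> s = iPP" using relations by (elim conjE) assumption
lemma braid: "(s \<otimes> iP) \<odot> ((iP \<otimes> s) \<odot> (s \<otimes> iP)) = (iP \<otimes> s) \<odot> ((s \<otimes> iP) \<odot> (iP \<otimes> s))"
  using relations by (elim conjE) assumption
lemma sigma'_sigma: "\<sigma>' \<odot> \<sigma> = iQP \<oplus> sm (-1) (\<eta> \<odot> \<epsilon>) \<oplus> sm (-1) ((cQ \<otimes> iP) \<odot> (\<eta> \<odot> (\<epsilon> \<odot> (iQ \<otimes> cP))))"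
  using relations by (elim conjE) assumption
lemma cP_cross_left: "s \<odot> (cP \<otimes> iP) = (iP \<otimes> cP) \<odot> s"
  using relations by (elim conjE) assumption
lemma cP_cross_right: "(cP \<otimes> iP) \<odot> s = s \<odot> (iP \<otimes> cP)"
  using relations by (elim conjE) assumption
lemma cP_cap': "\<epsilon>' \<odot> (cP \<otimes> iQ) = \<epsilon>' \<odot> (iP \<otimes> cQ)"
  using relations by (elim conjE) assumption
lemma cP_cup': "(cP \<otimes> iQ) \<odot> \<eta>' = sm (-1) ((iP \<otimes> cQ) \<odot> \<eta>')"
  using relations by (elim conjE) assumption

abbreviation X_cap where "X_cap \<equiv> iP \<otimes> \<epsilon>'"
abbreviation X_cross where "X_cross \<equiv> s \<otimes> iQ"
abbreviation X_cup where "X_cup \<equiv> iP \<otimes> \<eta>'"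
abbreviation X_low where "X_low \<equiv> X_cross \<odot> X_cup"
abbreviation X_top where "X_top \<equiv> X_cap \<otimes> iP"
abbreviation X_bottom where "X_bottom \<equiv> X_low \<otimes> iP"
abbreviation dotted_cupcap where "dotted_cupcap \<equiv> (cQ \<otimes> iP) \<odot> (\<eta> \<odot> (\<epsilon> \<odot> (iQ \<otimes> cP)))"

lemma P_sigma_expansion:
  "iP \<otimes> \<sigma> = (iP \<otimes> (\<epsilon> \<otimes> iPQ)) \<odot> ((iPQ \<otimes> X_cross) \<odot> (idm [Pob, Qob, Pob] \<otimes> \<eta>'))"
proof -
  have "iP \<otimes> \<sigma> = (iP \<otimes> (\<epsilon> \<otimes> iPQ)) \<odot> ((iP \<otimes> (iQ \<otimes> s \<otimes> iQ)) \<odot> (iP \<otimes> (iQP \<otimes> \<eta>')))"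
    unfolding th_sigma_def
    by (subst id_tensor_comp, (rule typing | simp)+, subst id_tensor_comp, (rule typing | simp)+)
  moreover have "iP \<otimes> (iQ \<otimes> s \<otimes> iQ) = iPQ \<otimes> X_cross"
    by (subst tensor_assoc, (rule typing | simp)+, subst id_tensor_assoc, (rule typing | simp)+)
  moreover have "iP \<otimes> (iQP \<otimes> \<eta>') = idm [Pob, Qob, Pob] \<otimes> \<eta>'"
    by (subst id_tensor_assoc, (rule typing | simp)+)
  ultimately show ?thesis by simp
qed

lemma P_sigma'_expansion:
  "iP \<otimes> \<sigma>' = (idm [Pob, Qob, Pob] \<otimes> \<epsilon>') \<odot> ((iPQ \<otimes> X_cross) \<odot> ((iP \<otimes> \<eta>) \<otimes> iPQ))"
proof -
  have "iP \<otimes> \<sigma>' = (iP \<otimes> (iQP \<otimes> \<epsilon>')) \<odot> ((iP \<otimes> (iQ \<otimes> s \<otimes> iQ)) \<odot> (iP \<otimes> (\<eta> \<otimes> iPQ)))"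
    unfolding th_sigma'_def
    by (subst id_tensor_comp, (rule typing | simp)+, subst id_tensor_comp, (rule typing | simp)+)
  moreover have "iP \<otimes> (iQ \<otimes> s \<otimes> iQ) = iPQ \<otimes> X_cross"
    by (subst tensor_assoc, (rule typing | simp)+, subst id_tensor_assoc, (rule typing | simp)+)
  moreover have "iP \<otimes> (iQP \<otimes> \<epsilon>') = idm [Pob, Qob, Pob] \<otimes> \<epsilon>'"
    by (subst id_tensor_assoc, (rule typing | simp)+)
  moreover have "iP \<otimes> (\<eta> \<otimes> iPQ) = (iP \<otimes> \<eta>) \<otimes> iPQ"
    by (rule tensor_assoc[symmetric], (rule typing | simp)+)
  ultimately show ?thesis by simp
qed

lemma sigma_cup': "(iP \<otimes> \<sigma>) \<odot> (\<eta>' \<otimes> iP) = X_cross \<odot> X_cup"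
proof -
  let ?cap = "iP \<otimes> (\<epsilon> \<otimes> iPQ)" and ?cup = "\<eta>' \<otimes> idm [Pob, Pob, Qob]"
  have "idm [Pob, Qob, Pob] \<otimes> \<eta>' = iPQ \<otimes> X_cup"
    by (subst id_tensor_assoc, (rule typing | simp)+)
  then have cups: "(idm [Pob, Qob, Pob] \<otimes> \<eta>') \<odot> (\<eta>' \<otimes> iP) = ?cup \<odot> X_cup"
    by (simp only:) (rule cup_slide, (rule typing | simp)+)
  have cross: "(iPQ \<otimes> X_cross) \<odot> ?cup = ?cup \<odot> X_cross"
    by (rule cup_slide, (rule typing | simp)+)
  have zigzag: "?cap \<odot> ?cup = idm [Pob, Pob, Qob]"
  proof -
    have "?cap \<odot> ?cup = ((iP \<otimes> \<epsilon>) \<otimes> iPQ) \<odot> ((\<eta>' \<otimes> iP) \<otimes> iPQ)"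
      by (subst tensor_assoc, (rule typing | simp)+, subst tensor_id_assoc, (rule typing | simp)+)
    also have "\<dots> = ((iP \<otimes> \<epsilon>) \<odot> (\<eta>' \<otimes> iP)) \<otimes> iPQ"
      by (rule comp_tensor_id[symmetric], (rule typing | simp)+)
    finally show ?thesis by (simp add: zigzag_P_cap tensor_id_id)
  qed
  have "(iP \<otimes> \<sigma>) \<odot> (\<eta>' \<otimes> iP) = ?cap \<odot> ((iPQ \<otimes> X_cross) \<odot> ((idm [Pob, Qob, Pob] \<otimes> \<eta>') \<odot> (\<eta>' \<otimes> iP)))"
    unfolding P_sigma_expansion
    by (subst comp_assoc[symmetric], (rule typing | simp)+, subst comp_assoc[symmetric],
        (rule typing | simp)+)
  also have "\<dots> = ?cap \<odot> (((iPQ \<otimes> X_cross) \<odot> ?cup) \<odot> X_cup)"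
    unfolding cups by (subst comp_assoc, (rule typing | simp)+)
  also have "\<dots> = (?cap \<odot> ?cup) \<odot> (X_cross \<odot> X_cup)"
    unfolding cross
    by (subst comp_assoc[symmetric], (rule typing | simp)+, rule comp_assoc, (rule typing | simp)+)
  also have "\<dots> = X_cross \<odot> X_cup"
    unfolding zigzag by (rule id_comp, (rule typing | simp)+)
  finally show ?thesis .
qed

lemma cap'_sigma': "(\<epsilon>' \<otimes> iP) \<odot> (iP \<otimes> \<sigma>') = X_cap \<odot> X_cross"
proof -
  let ?cap = "\<epsilon>' \<otimes> idm [Pob, Pob, Qob]" and ?cup = "(iP \<otimes> \<eta>) \<otimes> iPQ"
  have "idm [Pob, Qob, Pob] \<otimes> \<epsilon>' = iPQ \<otimes> X_cap"
    by (subst id_tensor_assoc, (rule typing | simp)+)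
  then have caps: "(\<epsilon>' \<otimes> iP) \<odot> (idm [Pob, Qob, Pob] \<otimes> \<epsilon>') = X_cap \<odot> ?cap"
    by (simp only:) (rule cap_slide, (rule typing | simp)+)
  have cross: "?cap \<odot> (iPQ \<otimes> X_cross) = X_cross \<odot> ?cap"
    by (rule cap_slide, (rule typing | simp)+)
  have zigzag: "?cap \<odot> ?cup = idm [Pob, Pob, Qob]"
  proof -
    have "?cap \<odot> ?cup = ((\<epsilon>' \<otimes> iP) \<otimes> iPQ) \<odot> ((iP \<otimes> \<eta>) \<otimes> iPQ)"
      by (subst tensor_id_assoc, (rule typing | simp)+)
    also have "\<dots> = ((\<epsilon>' \<otimes> iP) \<odot> (iP \<otimes> \<eta>)) \<otimes> iPQ"
      by (rule comp_tensor_id[symmetric], (rule typing | simp)+)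
    finally show ?thesis by (simp add: zigzag_P_cap' tensor_id_id)
  qed
  have "(\<epsilon>' \<otimes> iP) \<odot> (iP \<otimes> \<sigma>') = ((\<epsilon>' \<otimes> iP) \<odot> (idm [Pob, Qob, Pob] \<otimes> \<epsilon>')) \<odot> ((iPQ \<otimes> X_cross) \<odot> ?cup)"
    unfolding P_sigma'_expansion by (rule comp_assoc, (rule typing | simp)+)
  also have "\<dots> = X_cap \<odot> ((?cap \<odot> (iPQ \<otimes> X_cross)) \<odot> ?cup)"
    unfolding caps
    by (subst comp_assoc[symmetric], (rule typing | simp)+, subst comp_assoc, (rule typing | simp)+)
  also have "\<dots> = (X_cap \<odot> X_cross) \<odot> (?cap \<odot> ?cup)"
    unfolding cross
    by (subst comp_assoc[symmetric], (rule typing | simp)+, rule comp_assoc, (rule typing | simp)+)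
  also have "\<dots> = X_cap \<odot> X_cross"
    unfolding zigzag by (rule comp_id, (rule typing | simp)+)
  finally show ?thesis .
qed

lemma X_eq: "X = X_cap \<odot> X_low" unfolding th_X_def by simp

lemma id_QP_expansion: "iQP = ((\<sigma>' \<odot> \<sigma>) \<oplus> (\<eta> \<odot> \<epsilon>)) \<oplus> dotted_cupcap"
  by (rule eq_add_of_eq_diff[OF _ _ _ sigma'_sigma], (rule typing | simp)+)

lemma X_bottom_split: "X_bottom = (s \<otimes> iQP) \<odot> (iP \<otimes> (\<eta>' \<otimes> iP))"
proof -
  have "X_bottom = (X_cross \<otimes> iP) \<odot> (X_cup \<otimes> iP)"
    by (rule comp_tensor_id, (rule typing | simp)+)
  moreover have "X_cross \<otimes> iP = s \<otimes> (iQ \<otimes> iP)"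
    by (rule tensor_assoc, (rule typing | simp)+)
  moreover have "X_cup \<otimes> iP = iP \<otimes> (\<eta>' \<otimes> iP)"
    by (rule tensor_assoc, (rule typing | simp)+)
  ultimately show ?thesis by (simp add: tensor_id_id)
qed

text \<open>splice m is s \<circ> (X \<otimes> 1) with m inserted into the downward segment of the curl.\<close>

abbreviation splice where "splice m \<equiv> s \<odot> (X_top \<odot> ((iPP \<otimes> m) \<odot> X_bottom))"

lemma splice_comp:
  assumes u: "u \<in> par p c [Qob, Pob]" and v: "v \<in> par q [Qob, Pob] c"
  shows "splice (u \<odot> v) = s \<odot> ((X_top \<odot> (iPP \<otimes> u)) \<odot> ((iPP \<otimes> v) \<odot> X_bottom))"
proof -
  have dist: "iPP \<otimes> (u \<odot> v) = (iPP \<otimes> u) \<odot> (iPP \<otimes> v)"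
    by (rule id_tensor_comp, (rule typing u v | simp)+)
  have "splice (u \<odot> v) = s \<odot> (X_top \<odot> ((iPP \<otimes> u) \<odot> ((iPP \<otimes> v) \<odot> X_bottom)))"
    unfolding dist
    by (rule arg_cong[where f = "\<lambda>x. s \<odot> (X_top \<odot> x)"], rule comp_assoc[symmetric],
        (rule typing u v | simp)+)
  also have "\<dots> = s \<odot> ((X_top \<odot> (iPP \<otimes> u)) \<odot> ((iPP \<otimes> v) \<odot> X_bottom))"
    by (rule arg_cong[where f = "\<lambda>x. s \<odot> x"], rule comp_assoc, (rule typing u v | simp)+)
  finally show ?thesis .
qed

lemma X_top_eq: "X_top = iP \<otimes> (\<epsilon>' \<otimes> iP)"
  by (rule tensor_assoc, (rule typing | simp)+)

lemma PP_tensor: "g \<in> par p a b \<Longrightarrow> iPP \<otimes> g = iP \<otimes> (iP \<otimes> g)"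
  by (subst id_tensor_assoc, assumption, simp)

lemma PP_tensor_comp:
  assumes "f \<in> par p a (Pob # b)" "g \<in> par q b c"
  shows "(iPP \<otimes> g) \<odot> (iP \<otimes> f) = iP \<otimes> ((iP \<otimes> g) \<odot> f)"
  unfolding PP_tensor[OF assms(2)] by (rule id_tensor_comp[symmetric], (rule typing assms | simp)+)

lemma X_top_P_comp:
  assumes "f \<in> par p a [Pob, Qob, Pob]"
  shows "X_top \<odot> (iP \<otimes> f) = iP \<otimes> ((\<epsilon>' \<otimes> iP) \<odot> f)"
  unfolding X_top_eq by (rule id_tensor_comp[symmetric], (rule typing assms | simp)+)

lemma cap_X_bottom: "(iPP \<otimes> \<epsilon>) \<odot> X_bottom = s"
proof -
  let ?cups = "iP \<otimes> (\<eta>' \<otimes> iP)"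
  have slide: "(iPP \<otimes> \<epsilon>) \<odot> (s \<otimes> iQP) = (s \<otimes> idm []) \<odot> (iPP \<otimes> \<epsilon>)"
    by (rule disjoint_slide, (rule typing | simp)+)
  have zigzag: "(iPP \<otimes> \<epsilon>) \<odot> ?cups = iPP"
    by (subst PP_tensor_comp, (rule typing | simp)+, simp add: zigzag_P_cap tensor_id_id)
  have "(iPP \<otimes> \<epsilon>) \<odot> X_bottom = ((iPP \<otimes> \<epsilon>) \<odot> (s \<otimes> iQP)) \<odot> ?cups"
    unfolding X_bottom_split by (rule comp_assoc, (rule typing | simp)+)
  also have "\<dots> = (s \<otimes> idm []) \<odot> ((iPP \<otimes> \<epsilon>) \<odot> ?cups)"
    unfolding slide by (rule comp_assoc[symmetric], (rule typing | simp)+)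
  also have "\<dots> = s"
    unfolding zigzag
      by (subst comp_id, (rule typing | simp)+, rule tensor_unit, (rule typing | simp)+)
  finally show ?thesis .
qed

lemma X_top_cup: "X_top \<odot> (iPP \<otimes> \<eta>) = iPP"
  unfolding PP_tensor[OF par_\<eta>I[OF refl refl refl]]
  by (subst X_top_P_comp, (rule typing | simp)+, simp add: zigzag_P_cap' tensor_id_id)

lemma cap'_dot_Q_to_P: "(\<epsilon>' \<otimes> iP) \<odot> ((iP \<otimes> cQ) \<otimes> iP) = (\<epsilon>' \<otimes> iP) \<odot> (cP \<otimes> iQP)"
proof -
  have "(\<epsilon>' \<otimes> iP) \<odot> ((iP \<otimes> cQ) \<otimes> iP) = (\<epsilon>' \<odot> (cP \<otimes> iQ)) \<otimes> iP"
    unfolding cP_cap' by (rule comp_tensor_id[symmetric], (rule typing | simp)+)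
  also have "\<dots> = (\<epsilon>' \<otimes> iP) \<odot> (cP \<otimes> iQP)"
    by (subst comp_tensor_id, (rule typing | simp)+, subst tensor_id_assoc, (rule typing | simp)+)
  finally show ?thesis .
qed

lemma dotted_zigzag: "(\<epsilon>' \<otimes> iP) \<odot> ((iP \<otimes> (cQ \<otimes> iP)) \<odot> (iP \<otimes> \<eta>)) = cP"
proof -
  have slide: "(cP \<otimes> iQP) \<odot> (iP \<otimes> \<eta>) = (iP \<otimes> \<eta>) \<odot> (cP \<otimes> idm [])"
    by (rule disjoint_slide[symmetric], (rule typing | simp)+)
  have assoc: "iP \<otimes> (cQ \<otimes> iP) = (iP \<otimes> cQ) \<otimes> iP"
    by (rule tensor_assoc[symmetric], (rule typing | simp)+)
  have "(\<epsilon>' \<otimes> iP) \<odot> ((iP \<otimes> (cQ \<otimes> iP)) \<odot> (iP \<otimes> \<eta>)) = ((\<epsilon>' \<otimes> iP) \<odot> ((iP \<otimes> cQ) \<otimes> iP)) \<odot> (iP \<otimes> \<eta>)"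
    unfolding assoc by (rule comp_assoc, (rule typing | simp)+)
  also have "\<dots> = (\<epsilon>' \<otimes> iP) \<odot> ((iP \<otimes> \<eta>) \<odot> (cP \<otimes> idm []))"
    unfolding cap'_dot_Q_to_P slide[symmetric]
      by (rule comp_assoc[symmetric], (rule typing | simp)+)
  also have "\<dots> = iP \<odot> (cP \<otimes> idm [])"
    by (subst comp_assoc, (rule typing | simp)+, simp only: zigzag_P_cap')
  also have "\<dots> = cP"
    by (subst id_comp, (rule typing | simp)+, rule tensor_unit, (rule typing | simp)+)
  finally show ?thesis .
qed

lemma X_top_dotted_cup: "X_top \<odot> (iPP \<otimes> ((cQ \<otimes> iP) \<odot> \<eta>)) = iP \<otimes> cP"
proof -
  have "iPP \<otimes> ((cQ \<otimes> iP) \<odot> \<eta>) = iP \<otimes> (iP \<otimes> ((cQ \<otimes> iP) \<odot> \<eta>))"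
    by (rule PP_tensor, (rule typing | simp)+)
  also have "iP \<otimes> ((cQ \<otimes> iP) \<odot> \<eta>) = (iP \<otimes> (cQ \<otimes> iP)) \<odot> (iP \<otimes> \<eta>)"
    by (rule id_tensor_comp, (rule typing | simp)+)
  finally have "X_top \<odot> (iPP \<otimes> ((cQ \<otimes> iP) \<odot> \<eta>))
      = X_top \<odot> (iP \<otimes> ((iP \<otimes> (cQ \<otimes> iP)) \<odot> (iP \<otimes> \<eta>)))" by simp
  also have "\<dots> = iP \<otimes> ((\<epsilon>' \<otimes> iP) \<odot> ((iP \<otimes> (cQ \<otimes> iP)) \<odot> (iP \<otimes> \<eta>)))"
    by (rule X_top_P_comp, (rule typing | simp)+)
  finally show ?thesis by (simp only: dotted_zigzag)
qed

lemma dotted_cap_X_bottom: "(iPP \<otimes> (\<epsilon> \<odot> (iQ \<otimes> cP))) \<odot> X_bottom = s \<odot> (iP \<otimes> cP)"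
proof -
  have dist: "iPP \<otimes> (\<epsilon> \<odot> (iQ \<otimes> cP)) = (iPP \<otimes> \<epsilon>) \<odot> (idm [Pob, Pob, Qob] \<otimes> cP)"
    by (subst id_tensor_comp, (rule typing | simp)+, subst id_tensor_assoc, (rule typing | simp)+)
  have slide: "(idm [Pob, Pob, Qob] \<otimes> cP) \<odot> X_bottom = X_bottom \<odot> (iP \<otimes> cP)"
    by (rule disjoint_slide, (rule typing | simp)+)
  have "(iPP \<otimes> (\<epsilon> \<odot> (iQ \<otimes> cP))) \<odot> X_bottom = (iPP \<otimes> \<epsilon>) \<odot> (X_bottom \<odot> (iP \<otimes> cP))"
    unfolding dist slide[symmetric] by (rule comp_assoc[symmetric], (rule typing | simp)+)
  also have "\<dots> = s \<odot> (iP \<otimes> cP)"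
    by (subst comp_assoc, (rule typing | simp)+, simp only: cap_X_bottom)
  finally show ?thesis .
qed

lemma sigma_X_bottom: "(iPP \<otimes> \<sigma>) \<odot> X_bottom = (s \<otimes> iPQ) \<odot> (iP \<otimes> X_low)"
proof -
  have slide: "(iPP \<otimes> \<sigma>) \<odot> (s \<otimes> iQP) = (s \<otimes> iPQ) \<odot> (iPP \<otimes> \<sigma>)"
    by (rule disjoint_slide, (rule typing | simp)+)
  have cups: "(iPP \<otimes> \<sigma>) \<odot> (iP \<otimes> (\<eta>' \<otimes> iP)) = iP \<otimes> X_low"
    by (subst PP_tensor_comp, (rule typing | simp)+, simp only: sigma_cup')
  have "(iPP \<otimes> \<sigma>) \<odot> X_bottom = ((iPP \<otimes> \<sigma>) \<odot> (s \<otimes> iQP)) \<odot> (iP \<otimes> (\<eta>' \<otimes> iP))"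
    unfolding X_bottom_split by (rule comp_assoc, (rule typing | simp)+)
  also have "\<dots> = (s \<otimes> iPQ) \<odot> (iP \<otimes> X_low)"
    unfolding slide cups[symmetric] by (rule comp_assoc[symmetric], (rule typing | simp)+)
  finally show ?thesis .
qed

lemma X_top_sigma': "X_top \<odot> (iPP \<otimes> \<sigma>') = iP \<otimes> (X_cap \<odot> X_cross)"
  unfolding PP_tensor[OF par_\<sigma>'I[OF refl refl refl]]
  by (subst X_top_P_comp, (rule typing | simp)+, simp only: cap'_sigma')

lemma cupcap_term: "splice (\<eta> \<odot> \<epsilon>) = iPP"
proof -
  have "splice (\<eta> \<odot> \<epsilon>) = s \<odot> ((X_top \<odot> (iPP \<otimes> \<eta>)) \<odot> ((iPP \<otimes> \<epsilon>) \<odot> X_bottom))"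
    by (rule splice_comp, (rule typing | simp)+)
  also have "\<dots> = s \<odot> s"
    by (simp only: X_top_cup cap_X_bottom, rule arg_cong, rule id_comp, (rule typing | simp)+)
  finally show ?thesis by (simp only: s_s)
qed

lemma dotted_term: "splice dotted_cupcap = (cP \<otimes> iP) \<odot> (iP \<otimes> cP)"
proof -
  let ?B = "iP \<otimes> cP"
  have "dotted_cupcap = ((cQ \<otimes> iP) \<odot> \<eta>) \<odot> (\<epsilon> \<odot> (iQ \<otimes> cP))"
    by (rule comp_assoc, (rule typing | simp)+)
  then have "splice dotted_cupcap
      = s \<odot> ((X_top \<odot> (iPP \<otimes> ((cQ \<otimes> iP) \<odot> \<eta>))) \<odot> ((iPP \<otimes> (\<epsilon> \<odot> (iQ \<otimes> cP))) \<odot> X_bottom))"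
    by (simp only:) (rule splice_comp, (rule typing | simp)+)
  also have "\<dots> = s \<odot> (?B \<odot> (s \<odot> ?B))" by (simp only: X_top_dotted_cup dotted_cap_X_bottom)
  also have "\<dots> = (s \<odot> ?B) \<odot> (s \<odot> ?B)" by (rule comp_assoc, (rule typing | simp)+)
  also have "\<dots> = ((cP \<otimes> iP) \<odot> s) \<odot> (s \<odot> ?B)" by (simp only: cP_cross_right)
  also have "\<dots> = (cP \<otimes> iP) \<odot> (s \<odot> (s \<odot> ?B))" by (rule comp_assoc[symmetric], (rule typing | simp)+)
  also have "s \<odot> (s \<odot> ?B) = (s \<odot> s) \<odot> ?B" by (rule comp_assoc, (rule typing | simp)+)
  also have "\<dots> = ?B" unfolding s_s by (rule id_comp, (rule typing | simp)+)
  finally show ?thesis .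
qed

abbreviation T1Q where "T1Q \<equiv> (s \<otimes> iP) \<otimes> iQ"
abbreviation T2Q where "T2Q \<equiv> (iP \<otimes> s) \<otimes> iQ"
abbreviation PP_cup' where "PP_cup' \<equiv> iPP \<otimes> \<eta>'"
abbreviation PP_cap' where "PP_cap' \<equiv> iPP \<otimes> \<epsilon>'"

lemma braid_involutive: "(s \<otimes> iP) \<odot> ((iP \<otimes> s) \<odot> ((s \<otimes> iP) \<odot> (iP \<otimes> s))) = (iP \<otimes> s) \<odot> (s \<otimes> iP)"
proof -
  let ?s1 = "s \<otimes> iP" and ?s2 = "iP \<otimes> s"
  have s2_s2: "?s2 \<odot> ?s2 = idm [Pob, Pob, Pob]"
    by (subst id_tensor_comp[symmetric], (rule typing | simp)+, simp add: s_s tensor_id_id)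
  have "?s1 \<odot> (?s2 \<odot> (?s1 \<odot> ?s2)) = (?s1 \<odot> (?s2 \<odot> ?s1)) \<odot> ?s2"
    by (subst comp_assoc, (rule typing | simp)+, rule comp_assoc, (rule typing | simp)+)
  also have "\<dots> = ?s2 \<odot> (?s1 \<odot> (?s2 \<odot> ?s2))"
    unfolding braid by (subst comp_assoc[symmetric], (rule typing | simp)+, rule arg_cong,
        rule comp_assoc[symmetric], (rule typing | simp)+)
  also have "\<dots> = ?s2 \<odot> ?s1"
    unfolding s2_s2 by (subst comp_id, (rule typing | simp)+)
  finally show ?thesis .
qed

lemma braid_tensor_Q: "T1Q \<odot> (T2Q \<odot> (T1Q \<odot> T2Q)) = T2Q \<odot> T1Q"
proof -
  have "T1Q \<odot> (T2Q \<odot> (T1Q \<odot> T2Q)) = ((s \<otimes> iP) \<odot> ((iP \<otimes> s) \<odot> ((s \<otimes> iP) \<odot> (iP \<otimes> s)))) \<otimes> iQ"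
    by (subst comp_tensor_id, (rule typing | simp)+, subst comp_tensor_id, (rule typing | simp)+,
        subst comp_tensor_id, (rule typing | simp)+)
  also have "\<dots> = T2Q \<odot> T1Q"
    unfolding braid_involutive by (rule comp_tensor_id, (rule typing | simp)+)
  finally show ?thesis .
qed

lemma s_PP_cap': "s \<odot> PP_cap' = PP_cap' \<odot> (s \<otimes> iPQ)"
proof -
  have "s \<odot> PP_cap' = (s \<otimes> idm []) \<odot> PP_cap'"
    by (subst tensor_unit, (rule typing | simp)+)
  also have "\<dots> = s \<otimes> \<epsilon>'"
    by (rule tensor_as_comp_left_above[symmetric], (rule typing | simp)+)
  also have "\<dots> = PP_cap' \<odot> (s \<otimes> iPQ)"
    by (rule tensor_as_comp_right_above, (rule typing | simp)+)
  finally show ?thesis .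
qed

lemma PP_cup'_s: "PP_cup' \<odot> s = (s \<otimes> iPQ) \<odot> PP_cup'"
proof -
  have "PP_cup' \<odot> s = PP_cup' \<odot> (s \<otimes> idm [])"
    by (subst tensor_unit, (rule typing | simp)+)
  also have "\<dots> = s \<otimes> \<eta>'"
    by (rule tensor_as_comp_right_above[symmetric], (rule typing | simp)+)
  also have "\<dots> = (s \<otimes> iPQ) \<odot> PP_cup'"
    by (rule tensor_as_comp_left_above, (rule typing | simp)+)
  finally show ?thesis .
qed

lemma P_X_cross: "iP \<otimes> X_cross = T2Q"
  by (rule tensor_assoc[symmetric], (rule typing | simp)+)
lemma s_PQ: "s \<otimes> iPQ = T1Q"
proof -
  have "(s \<otimes> iP) \<otimes> iQ = s \<otimes> (iP \<otimes> iQ)"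
    by (rule tensor_assoc, (rule typing | simp)+)
  then show ?thesis by (simp add: tensor_id_id)
qed
lemma P_X_cap: "iP \<otimes> X_cap = PP_cap'" by (rule PP_tensor[symmetric], (rule typing | simp)+)
lemma P_X_cup: "iP \<otimes> X_cup = PP_cup'" by (rule PP_tensor[symmetric], (rule typing | simp)+)

lemma P_X_s_expansion: "(iP \<otimes> X) \<odot> s = PP_cap' \<odot> (T2Q \<odot> (T1Q \<odot> PP_cup'))"
proof -
  have "iP \<otimes> X = (iP \<otimes> X_cap) \<odot> ((iP \<otimes> X_cross) \<odot> (iP \<otimes> X_cup))"
    unfolding X_eq
    by (subst id_tensor_comp, (rule typing | simp)+, subst id_tensor_comp, (rule typing | simp)+)
  then have "(iP \<otimes> X) \<odot> s = (PP_cap' \<odot> (T2Q \<odot> PP_cup')) \<odot> s"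
    by (simp only: P_X_cap P_X_cup P_X_cross)
  also have "\<dots> = PP_cap' \<odot> ((T2Q \<odot> PP_cup') \<odot> s)"
    by (rule comp_assoc[symmetric], (rule typing | simp)+)
  also have "(T2Q \<odot> PP_cup') \<odot> s = T2Q \<odot> (PP_cup' \<odot> s)"
    by (rule comp_assoc[symmetric], (rule typing | simp)+)
  also have "PP_cup' \<odot> s = T1Q \<odot> PP_cup'" by (simp only: PP_cup'_s s_PQ)
  finally show ?thesis .
qed

lemma cross_through_braid:
  "s \<odot> ((PP_cap' \<odot> T2Q) \<odot> (T1Q \<odot> (T2Q \<odot> PP_cup'))) = PP_cap' \<odot> (T2Q \<odot> (T1Q \<odot> PP_cup'))"
proof -
  have "s \<odot> ((PP_cap' \<odot> T2Q) \<odot> (T1Q \<odot> (T2Q \<odot> PP_cup')))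
      = (s \<odot> PP_cap') \<odot> (T2Q \<odot> (T1Q \<odot> (T2Q \<odot> PP_cup')))"
    by (subst comp_assoc[symmetric], (rule typing | simp)+, rule comp_assoc, (rule typing | simp)+)
  also have "\<dots> = PP_cap' \<odot> (T1Q \<odot> (T2Q \<odot> (T1Q \<odot> (T2Q \<odot> PP_cup'))))"
    by (simp only: s_PP_cap' s_PQ, rule comp_assoc[symmetric], (rule typing | simp)+)
  also have "T1Q \<odot> (T2Q \<odot> (T1Q \<odot> (T2Q \<odot> PP_cup'))) = (T1Q \<odot> (T2Q \<odot> (T1Q \<odot> T2Q))) \<odot> PP_cup'"
  proof -
    have "T1Q \<odot> (T2Q \<odot> PP_cup') = (T1Q \<odot> T2Q) \<odot> PP_cup'"
      by (rule comp_assoc, (rule typing | simp)+)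
    moreover have "T2Q \<odot> ((T1Q \<odot> T2Q) \<odot> PP_cup') = (T2Q \<odot> (T1Q \<odot> T2Q)) \<odot> PP_cup'"
      by (rule comp_assoc, (rule typing | simp)+)
    moreover have "T1Q \<odot> ((T2Q \<odot> (T1Q \<odot> T2Q)) \<odot> PP_cup') = (T1Q \<odot> (T2Q \<odot> (T1Q \<odot> T2Q))) \<odot> PP_cup'"
      by (rule comp_assoc, (rule typing | simp)+)
    ultimately show ?thesis by simp
  qed
  also have "\<dots> = T2Q \<odot> (T1Q \<odot> PP_cup')"
    by (simp only: braid_tensor_Q, rule comp_assoc[symmetric], (rule typing | simp)+)
  finally show ?thesis .
qed

lemma sigma_term: "splice (\<sigma>' \<odot> \<sigma>) = (iP \<otimes> X) \<odot> s"
proof -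
  have "splice (\<sigma>' \<odot> \<sigma>) = s \<odot> ((X_top \<odot> (iPP \<otimes> \<sigma>')) \<odot> ((iPP \<otimes> \<sigma>) \<odot> X_bottom))"
    by (rule splice_comp, (rule typing | simp)+)
  also have "\<dots> = s \<odot> ((iP \<otimes> (X_cap \<odot> X_cross)) \<odot> ((s \<otimes> iPQ) \<odot> (iP \<otimes> X_low)))"
    by (simp only: X_top_sigma' sigma_X_bottom)
  also have "iP \<otimes> (X_cap \<odot> X_cross) = PP_cap' \<odot> T2Q"
    unfolding P_X_cap[symmetric] P_X_cross[symmetric]
      by (rule id_tensor_comp, (rule typing | simp)+)
  also have "iP \<otimes> X_low = T2Q \<odot> PP_cup'"
    unfolding P_X_cup[symmetric] P_X_cross[symmetric]
      by (rule id_tensor_comp, (rule typing | simp)+)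
  also have "s \<otimes> iPQ = T1Q" by (rule s_PQ)
  also have "s \<odot> ((PP_cap' \<odot> T2Q) \<odot> (T1Q \<odot> (T2Q \<odot> PP_cup'))) = (iP \<otimes> X) \<odot> s"
    unfolding cross_through_braid P_X_s_expansion ..
  finally show ?thesis .
qed

lemma s_X_P: "s \<odot> (X \<otimes> iP) = (iP \<otimes> X) \<odot> s \<oplus> iPP \<oplus> (cP \<otimes> iP) \<odot> (iP \<otimes> cP)"
proof -
  have "X \<otimes> iP = X_top \<odot> X_bottom"
    unfolding X_eq by (rule comp_tensor_id, (rule typing | simp)+)
  also have "\<dots> = X_top \<odot> ((iPP \<otimes> iQP) \<odot> X_bottom)"
    unfolding tensor_id_id by (subst id_comp, (rule typing | simp)+)
  also have "iPP \<otimes> iQP = iPP \<otimes> (\<sigma>' \<odot> \<sigma>) \<oplus> iPP \<otimes> (\<eta> \<odot> \<epsilon>) \<oplus> iPP \<otimes> dotted_cupcap"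
    by (subst id_QP_expansion, subst tensor_add_right, (rule typing | simp)+,
        subst tensor_add_right, (rule typing | simp)+)
  finally have "s \<odot> (X \<otimes> iP) = splice (\<sigma>' \<odot> \<sigma>) \<oplus> splice (\<eta> \<odot> \<epsilon>) \<oplus> splice dotted_cupcap"
    by (simp only:) (rule comp_sum3_sandwich, (rule typing | simp)+)
  then show ?thesis by (simp only: sigma_term cupcap_term dotted_term)
qed

abbreviation cP_mid where "cP_mid \<equiv> (iP \<otimes> cP) \<otimes> iQ"

lemma cP_PQ: "cP \<otimes> iPQ = (cP \<otimes> iP) \<otimes> iQ"
  by (subst tensor_id_assoc, (rule typing | simp)+)

lemma X_cup_cP: "X_cup \<odot> cP = (cP \<otimes> iPQ) \<odot> X_cup"
proof -
  have "X_cup \<odot> (cP \<otimes> idm []) = (cP \<otimes> iPQ) \<odot> X_cup"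
    by (rule disjoint_slide, (rule typing | simp)+)
  then show ?thesis by (simp add: tensor_unit[OF par_hom[OF par_cP]])
qed

lemma X_cross_cP_left: "X_cross \<odot> (cP \<otimes> iPQ) = cP_mid \<odot> X_cross"
proof -
  have "X_cross \<odot> ((cP \<otimes> iP) \<otimes> iQ) = (s \<odot> (cP \<otimes> iP)) \<otimes> iQ"
    by (rule comp_tensor_id[symmetric], (rule typing | simp)+)
  also have "\<dots> = ((iP \<otimes> cP) \<odot> s) \<otimes> iQ" by (simp only: cP_cross_left)
  also have "\<dots> = cP_mid \<odot> X_cross" by (rule comp_tensor_id, (rule typing | simp)+)
  finally show ?thesis by (simp only: cP_PQ)
qed

lemma X_cross_cP_right: "X_cross \<odot> cP_mid = (cP \<otimes> iPQ) \<odot> X_cross"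
proof -
  have "X_cross \<odot> cP_mid = (s \<odot> (iP \<otimes> cP)) \<otimes> iQ"
    by (rule comp_tensor_id[symmetric], (rule typing | simp)+)
  also have "\<dots> = ((cP \<otimes> iP) \<odot> s) \<otimes> iQ" by (simp only: cP_cross_right)
  also have "\<dots> = ((cP \<otimes> iP) \<otimes> iQ) \<odot> X_cross"
    by (rule comp_tensor_id, (rule typing | simp)+)
  finally show ?thesis by (simp only: cP_PQ)
qed

lemma X_cap_cP_mid: "X_cap \<odot> cP_mid = X_cap \<odot> (iPP \<otimes> cQ)"
proof -
  have "X_cap \<odot> cP_mid = iP \<otimes> (\<epsilon>' \<odot> (cP \<otimes> iQ))"
    by (subst tensor_assoc, (rule typing | simp)+, rule id_tensor_comp[symmetric],
        (rule typing | simp)+)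
  also have "\<dots> = iP \<otimes> (\<epsilon>' \<odot> (iP \<otimes> cQ))" by (simp only: cP_cap')
  also have "\<dots> = X_cap \<odot> (iP \<otimes> (iP \<otimes> cQ))"
    by (rule id_tensor_comp, (rule typing | simp)+)
  also have "iP \<otimes> (iP \<otimes> cQ) = iPP \<otimes> cQ"
    by (subst id_tensor_assoc, (rule typing | simp)+)
  finally show ?thesis .
qed

lemma cQ_X_cross: "(iPP \<otimes> cQ) \<odot> X_cross = X_cross \<odot> (iPP \<otimes> cQ)"
  by (rule disjoint_slide, (rule typing | simp)+)

lemma cQ_X_cup: "(iPP \<otimes> cQ) \<odot> X_cup = sm (-1) (cP_mid \<odot> X_cup)"
proof -
  have cQ_cup': "(iP \<otimes> cQ) \<odot> \<eta>' = sm (-1) ((cP \<otimes> iQ) \<odot> \<eta>')"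
    by (simp only: cP_cup', rule smult_neg_neg[symmetric], (rule typing | simp)+)
  have "(iPP \<otimes> cQ) \<odot> X_cup = iP \<otimes> ((iP \<otimes> cQ) \<odot> \<eta>')"
    by (rule PP_tensor_comp, (rule typing | simp)+)
  also have "\<dots> = sm (-1) (iP \<otimes> ((cP \<otimes> iQ) \<odot> \<eta>'))"
    by (simp only: cQ_cup', rule tensor_smult_right, (rule typing | simp)+)
  also have "iP \<otimes> ((cP \<otimes> iQ) \<odot> \<eta>') = cP_mid \<odot> X_cup"
    by (subst tensor_assoc, (rule typing | simp)+, rule id_tensor_comp, (rule typing | simp)+)
  finally show ?thesis .
qed

lemma X_cap_cP: "X_cap \<odot> (cP \<otimes> iPQ) = cP \<odot> X_cap"
proof -
  have "X_cap \<odot> (cP \<otimes> iPQ) = (cP \<otimes> idm []) \<odot> X_cap"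
    by (rule disjoint_slide, (rule typing | simp)+)
  then show ?thesis by (simp add: tensor_unit[OF par_hom[OF par_cP]])
qed

lemma cP_X_anticommute: "cP \<odot> X = sm (-1) (X \<odot> cP)"
proof -
  have "X \<odot> cP = X_cap \<odot> (X_cross \<odot> ((cP \<otimes> iPQ) \<odot> X_cup))"
    unfolding X_eq X_cup_cP[symmetric]
    by (subst comp_assoc[symmetric], (rule typing | simp)+, subst comp_assoc[symmetric],
        (rule typing | simp)+)
  also have "\<dots> = (X_cap \<odot> cP_mid) \<odot> (X_cross \<odot> X_cup)"
    by (subst comp_assoc, (rule typing | simp)+, simp only: X_cross_cP_left,
        subst comp_assoc[symmetric], (rule typing | simp)+, rule comp_assoc, (rule typing | simp)+)
  also have "\<dots> = X_cap \<odot> (X_cross \<odot> ((iPP \<otimes> cQ) \<odot> X_cup))"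
    by (simp only: X_cap_cP_mid, subst comp_assoc[symmetric], (rule typing | simp)+,
        subst (2) comp_assoc, (rule typing | simp)+, simp only: cQ_X_cross,
        subst comp_assoc[symmetric], (rule typing | simp)+)
  also have "\<dots> = sm (-1) (X_cap \<odot> ((X_cross \<odot> cP_mid) \<odot> X_cup))"
    by (simp only: cQ_X_cup, subst comp_smult_right, (rule typing | simp)+,
        subst comp_smult_right, (rule typing | simp)+, subst comp_assoc, (rule typing | simp)+)
  also have "X_cap \<odot> ((X_cross \<odot> cP_mid) \<odot> X_cup) = cP \<odot> X"
    unfolding X_cross_cP_right X_eq
    by (subst comp_assoc[symmetric], (rule typing | simp)+, subst comp_assoc, (rule typing | simp)+,
        simp only: X_cap_cP, rule comp_assoc[symmetric], (rule typing | simp)+)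
  finally have "sm (-1) (X \<odot> cP) = sm (-1) (sm (-1) (cP \<odot> X))" by simp
  also have "\<dots> = cP \<odot> X" by (rule smult_neg_neg, (rule typing | simp)+)
  finally show ?thesis by (rule sym)
qed

lemma cross_conj_dots: "s \<odot> (((cP \<otimes> iP) \<odot> (iP \<otimes> cP)) \<odot> s) = sm (-1) ((cP \<otimes> iP) \<odot> (iP \<otimes> cP))"
proof -
  let ?A = "cP \<otimes> iP" and ?B = "iP \<otimes> cP"
  have "(?A \<odot> ?B) \<odot> s = ?A \<odot> (s \<odot> ?A)"
    unfolding cP_cross_left by (rule comp_assoc[symmetric], (rule typing | simp)+)
  also have "\<dots> = (?A \<odot> s) \<odot> ?A" by (rule comp_assoc, (rule typing | simp)+)
  also have "\<dots> = s \<odot> (?B \<odot> ?A)"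
    unfolding cP_cross_right by (rule comp_assoc[symmetric], (rule typing | simp)+)
  finally have inner: "(?A \<odot> ?B) \<odot> s = s \<odot> (?B \<odot> ?A)" .
  have "s \<odot> ((?A \<odot> ?B) \<odot> s) = (s \<odot> s) \<odot> (?B \<odot> ?A)"
    unfolding inner by (rule comp_assoc, (rule typing | simp)+)
  also have "\<dots> = ?B \<odot> ?A" unfolding s_s by (rule id_comp, (rule typing | simp)+)
  also have "\<dots> = sm (-1) (cP \<otimes> cP)"
    by (rule odd_tensor_as_comp_right_above, (rule typing | simp)+)
  also have "cP \<otimes> cP = ?A \<odot> ?B"
    by (rule tensor_as_comp_left_above, (rule typing | simp)+)
  finally show ?thesis .
qed

lemma X_P_s: "(X \<otimes> iP) \<odot> s = s \<odot> (iP \<otimes> X) \<oplus> iPP \<oplus> sm (-1) ((cP \<otimes> iP) \<odot> (iP \<otimes> cP))"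
proof -
  let ?D = "(cP \<otimes> iP) \<odot> (iP \<otimes> cP)"
  have "(X \<otimes> iP) \<odot> s = (s \<odot> s) \<odot> ((X \<otimes> iP) \<odot> s)"
    unfolding s_s by (rule id_comp[symmetric], (rule typing | simp)+)
  also have "\<dots> = s \<odot> (s \<odot> ((X \<otimes> iP) \<odot> s))"
    by (rule comp_assoc[symmetric], (rule typing | simp)+)
  also have "s \<odot> ((X \<otimes> iP) \<odot> s) = iPP \<odot> ((s \<odot> (X \<otimes> iP)) \<odot> s)"
    by (subst id_comp, (rule typing | simp)+, rule comp_assoc, (rule typing | simp)+)
  also have "s \<odot> (iPP \<odot> ((s \<odot> (X \<otimes> iP)) \<odot> s))
      = s \<odot> (iPP \<odot> (((iP \<otimes> X) \<odot> s) \<odot> s)) \<oplus> s \<odot> (iPP \<odot> (iPP \<odot> s)) \<oplus> s \<odot> (iPP \<odot> (?D \<odot> s))"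
    unfolding s_X_P by (rule comp_sum3_sandwich, (rule typing | simp)+)
  also have "((iP \<otimes> X) \<odot> s) \<odot> s = iP \<otimes> X"
    by (subst comp_assoc[symmetric], (rule typing | simp)+, simp only: s_s, rule comp_id,
        (rule typing | simp)+)
  also have "s \<odot> (iPP \<odot> (iPP \<odot> s)) = iPP"
    by (subst id_comp, (rule typing | simp)+, subst id_comp, (rule typing | simp)+, rule s_s)
  also have "s \<odot> (iPP \<odot> (?D \<odot> s)) = sm (-1) ?D"
    by (subst id_comp, (rule typing | simp)+, rule cross_conj_dots)
  also have "iPP \<odot> (iP \<otimes> X) = iP \<otimes> X" by (rule id_comp, (rule typing | simp)+)
  finally show ?thesis .
qed

abbreviation Tn where "Tn n i \<equiv> th_T C G n i"
abbreviation Cn where "Cn n i \<equiv> th_C C G n i"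
abbreviation Xn where "Xn n i \<equiv> th_Xi C G n i"

lemma Xn_whisker: "Xn n i = whisker (Ps (i - 1)) X (Ps (n - i))" unfolding th_Xi_def ..
lemma Cn_whisker: "Cn n i = whisker (Ps (i - 1)) cP (Ps (n - i))" unfolding th_C_def ..
lemma Tn_whisker: "Tn n i = whisker (Ps (i - 1)) s (Ps (n - i - 1))" unfolding th_T_def ..

lemma Tn_Xn_relations:
  assumes "1 \<le> i" "i \<le> n - 1"
  shows "Tn n i \<odot> Xn n i
           = Xn n (i + 1) \<odot> Tn n i \<oplus> idm (Ps n) \<oplus> Cn n i \<odot> Cn n (i + 1)"
    and "Xn n i \<odot> Tn n i
           = Tn n i \<odot> Xn n (i + 1) \<oplus> idm (Ps n) \<oplus> sm (-1) (Cn n i \<odot> Cn n (i + 1))"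
proof -
  define k m where "k = i - 1" and "m = n - i - 1"
  have idx: "i - 1 = k" "n - i = Suc m" "i + 1 - 1 = Suc k" "n - (i + 1) = m" "n - i - 1 = m"
    and n: "n = k + Suc (Suc m)"
    using assms unfolding k_def m_def by arith+
  let ?w = "\<lambda>f. whisker (Ps k) f (Ps m)"
  have T: "Tn n i = ?w s" unfolding Tn_whisker idx by simp
  have X1: "Xn n i = ?w (X \<otimes> iP)"
    unfolding Xn_whisker idx by (rule whisker_P_right[symmetric], (rule typing | simp)+)
  have X2: "Xn n (i + 1) = ?w (iP \<otimes> X)"
    unfolding Xn_whisker idx by (rule whisker_P_left[symmetric], (rule typing | simp)+)
  have C1: "Cn n i = ?w (cP \<otimes> iP)"
    unfolding Cn_whisker idx by (rule whisker_P_right[symmetric], (rule typing | simp)+)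
  have C2: "Cn n (i + 1) = ?w (iP \<otimes> cP)"
    unfolding Cn_whisker idx by (rule whisker_P_left[symmetric], (rule typing | simp)+)
  have I: "idm (Ps n) = ?w iPP"
    unfolding whisker_id n replicate_add by simp
  have comp: "?w g \<odot> ?w f = ?w (g \<odot> f)"
    if "f \<in> par p [Pob, Pob] [Pob, Pob]" "g \<in> par q [Pob, Pob] [Pob, Pob]" for f g p q
    using whisker_comp that by blast
  have sum: "?w (f \<oplus> g \<oplus> h) = ?w f \<oplus> ?w g \<oplus> ?w h"
    if "f \<in> par False [Pob, Pob] [Pob, Pob]" "g \<in> par False [Pob, Pob] [Pob, Pob]"
      and "h \<in> par False [Pob, Pob] [Pob, Pob]" for f g h
    by (subst whisker_add, (rule typing that | simp)+, subst whisker_add, (rule that)+, rule refl)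
  show "Tn n i \<odot> Xn n i
      = Xn n (i + 1) \<odot> Tn n i \<oplus> idm (Ps n) \<oplus> Cn n i \<odot> Cn n (i + 1)"
    unfolding T X1 X2 C1 C2 I
    by (subst (1 2 3) comp, (rule typing | simp)+, subst s_X_P, rule sum, (rule typing | simp)+)
  show "Xn n i \<odot> Tn n i
      = Tn n i \<odot> Xn n (i + 1) \<oplus> idm (Ps n) \<oplus> sm (-1) (Cn n i \<odot> Cn n (i + 1))"
    unfolding T X1 X2 C1 C2 I
    by (subst (1 2 3) comp, (rule typing | simp)+, subst X_P_s, subst sum, (rule typing | simp)+,
        subst whisker_smult, (rule typing | simp)+)
qed

lemma Cn_Xn_supercommute:
  assumes "1 \<le> i" "i \<le> n" "1 \<le> j" "j \<le> n"
  shows "Cn n i \<odot> Xn n j = sm (if i = j then -1 else 1) (Xn n j \<odot> Cn n i)"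
proof (cases "i = j")
  case True
  let ?w = "\<lambda>f. whisker (Ps (i - 1)) f (Ps (n - i))"
  have "?w cP \<odot> ?w X = ?w (sm (-1) (X \<odot> cP))"
    by (subst whisker_comp, (rule typing | simp)+, simp only: cP_X_anticommute)
  also have "\<dots> = sm (-1) (?w X \<odot> ?w cP)"
    by (subst whisker_smult, (rule typing | simp)+, subst whisker_comp, (rule typing | simp)+)
  finally show ?thesis unfolding Cn_whisker Xn_whisker using True by simp
next
  case False
  have Ci: "Cn n i \<in> par True (Ps n) (Ps n)"
    unfolding Cn_whisker using par_cP assms(1,2) by (rule whisker_P_par)
  have Xj: "Xn n j \<in> par False (Ps n) (Ps n)"
    unfolding Xn_whisker using par_X assms(3,4) by (rule whisker_P_par)
  have "sm 1 (Xn n j \<odot> Cn n i) = Xn n j \<odot> Cn n i"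
    using smult_one par_hom[OF par_compI[OF Ci Xj refl refl refl refl]] by blast
  moreover have "Cn n i \<odot> Xn n j = Xn n j \<odot> Cn n i"
  proof (cases "i < j")
    case True
    then show ?thesis
      unfolding Cn_whisker Xn_whisker using P_strands_commute[OF par_cP par_X, of i j n] assms
      by simp
  next
    case False
    with \<open>i \<noteq> j\<close> have "j < i" by simp
    then show ?thesis
      unfolding Cn_whisker Xn_whisker using P_strands_commute[OF par_X par_cP, of j i n] assms
      by simp
  qed
  ultimately show ?thesis using False by simp
qed

lemma Xn_Xn_commute:
  assumes "1 \<le> i" "i \<le> n" "1 \<le> j" "j \<le> n"
  shows "Xn n i \<odot> Xn n j = Xn n j \<odot> Xn n i"
proof -
  have ordered: "Xn n i \<odot> Xn n j = Xn n j \<odot> Xn n i"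
    if "1 \<le> i" "i < j" "j \<le> n" for i j
    unfolding Xn_whisker using P_strands_commute[OF par_X par_X _ that] by simp
  consider "i < j" | "i = j" | "j < i" by arith
  then show ?thesis
  proof cases
    case 1
    then show ?thesis using ordered assms by blast
  next
    case 2
    then show ?thesis by simp
  next
    case 3
    then show ?thesis using ordered[of j i] assms by simp
  qed
qed

end

theorem proposition4:
  fixes C :: "('k::field_char_0, 'm) scat" and G :: "'m thgen" and n :: nat
  assumes "smcat C" and "th_rel C G" and "n \<ge> 2"
  shows "(\<forall>i. 1 \<le> i \<and> i \<le> n - 1 \<longrightarrow>
            sc_comp C (th_T C G n i) (th_Xi C G n i)
              = sc_add C (sc_add C (sc_comp C (th_Xi C G n (i + 1)) (th_T C G n i))
                                   (sc_id C (replicate n True)))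
                         (sc_comp C (th_C C G n i) (th_C C G n (i + 1)))) \<and>
         (\<forall>i. 1 \<le> i \<and> i \<le> n - 1 \<longrightarrow>
            sc_comp C (th_Xi C G n i) (th_T C G n i)
              = sc_add C (sc_add C (sc_comp C (th_T C G n i) (th_Xi C G n (i + 1)))
                                   (sc_id C (replicate n True)))
                         (sc_smult C (-1) (sc_comp C (th_C C G n i) (th_C C G n (i + 1))))) \<and>
         (\<forall>i j. 1 \<le> i \<and> i \<le> n \<and> 1 \<le> j \<and> j \<le> n \<longrightarrow>
            sc_comp C (th_C C G n i) (th_Xi C G n j)
              = sc_smult C (if i = j then -1 else 1) (sc_comp C (th_Xi C G n j) (th_C C G n i))) \<and>
         (\<forall>i j. 1 \<le> i \<and> i \<le> n \<and> 1 \<le> j \<and> j \<le> n \<longrightarrow>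
            sc_comp C (th_Xi C G n i) (th_Xi C G n j) = sc_comp C (th_Xi C G n j) (th_Xi C G n i))"
proof -
  interpret twisted_heisenberg C G
    using assms(1,2) by unfold_locales
  show ?thesis
    by (intro conjI allI impI; elim conjE)
      (rule Tn_Xn_relations Cn_Xn_supercommute Xn_Xn_commute; assumption)+
qed

end
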